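(* Let $\Omega,\mathcal{L},\mathbb{G}$ be as in the context, assume (A1), (A2) and that $\mathbb{G}$ satisfies (K2) with exponent $\gamma\in(0,1]$. For $n\ge1$ let $\Phi_n$ be the $n$-th eigenfunction of $\mathcal{L}^{-1}$ with $\|\Phi_n\|_{L^2(\Omega)}=1$. Then there is a constant $\overline{\kappa}_n>0$ depending only on $N,s,n,\Omega$ such that $|\Phi_n(x)|\le\overline{\kappa}_n\,\mathrm{dist}(x,\partial\Omega)^\gamma$ for all $x\in\overline{\Omega}$.
   Context: Let $N\ge2$, $\Omega\subset\mathbb{R}^N$ a bounded domain with $C^{1,1}$ boundary. $\mathcal{L}:\mathrm{dom}(\mathcal{L})\subseteq L^1(\Omega)\to L^1(\Omega)$ is densely defined, linear (Dirichlet conditions built in), with (A1) $\mathcal{L}$ is $m$-accretive on $L^1(\Omega)$ and (A2) if $0\le g\le1$ then $0\le e^{-t\mathcal{L}}g\le1$ for all $t>0$. It has a left inverse $\mathcal{L}^{-1}[g](x)=\int_\Omega\mathbb{G}(x,y)g(y)dy$ on $L^1(\Omega)$, self-adjoint on $L^2(\Omega)$. With $\delta_\gamma(x):=\mathrm{dist}(x,\partial\Omega)^\gamma$, (K2) means: there are $s\in(0,1]$, $\gamma\in(0,1]$, $c_0,c_1>0$ with, for a.e. $x,y\in\Omega$, $c_0\delta_\gamma(x)\delta_\gamma(y)\le\mathbb{G}(x,y)\le\frac{c_1}{|x-y|^{N-2s}}\Big(\frac{\delta_\gamma(x)}{|x-y|^\gamma}\wedge1\Big)\Big(\frac{\delta_\gamma(y)}{|x-y|^\gamma}\wedge1\Big)$.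 Under these assumptions $\mathcal{L}^{-1}$ is a compact self-adjoint operator on $L^2(\Omega)$ with discrete spectrum; eigenfunctions are ordered by decreasing eigenvalue of $\mathcal{L}^{-1}$. *)

theory Defs
  imports "HOL-Analysis.Analysis"
begin

definition bounded_domain :: "('a::euclidean_space) set \<Rightarrow> bool" where
  "bounded_domain \<Omega> \<longleftrightarrow> open \<Omega> \<and> connected \<Omega> \<and> bounded \<Omega> \<and> \<Omega> \<noteq> {}"

text \<open>C^{1,1} boundary: near every boundary point, after choosing a unit direction e,
  the domain is the strict epigraph (in direction e) of a C^1 function with Lipschitz
  derivative, defined on the hyperplane orthogonal to e (the function is given on the whole
  space and only evaluated on that hyperplane).\<close>
definition C11_boundary :: "('a::euclidean_space) set \<Rightarrow> bool" where
  "C11_boundary \<Omega> \<longleftrightarrow>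
     (\<forall>p\<in>frontier \<Omega>. \<exists>r>0. \<exists>e::'a. \<exists>h::'a \<Rightarrow> real. \<exists>Dh::'a \<Rightarrow> 'a \<Rightarrow> real. \<exists>Lc.
        norm e = 1 \<and>
        (\<forall>x. (h has_derivative Dh x) (at x)) \<and>
        (\<forall>x y. onorm (\<lambda>v. Dh x v - Dh y v) \<le> Lc * norm (x - y)) \<and>
        (\<forall>x\<in>ball p r. x \<in> \<Omega> \<longleftrightarrow> h (x - (x \<bullet> e) *\<^sub>R e) < x \<bullet> e))"

definition aeq :: "('a::euclidean_space) set \<Rightarrow> ('a \<Rightarrow> real) \<Rightarrow> ('a \<Rightarrow> real) \<Rightarrow> bool" where
  "aeq \<Omega> f g \<longleftrightarrow> (AE x in lebesgue_on \<Omega>. f x = g x)"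

definition L1norm :: "('a::euclidean_space) set \<Rightarrow> ('a \<Rightarrow> real) \<Rightarrow> real" where
  "L1norm \<Omega> f = (\<integral>x. \<bar>f x\<bar> \<partial>lebesgue_on \<Omega>)"

definition L2fun :: "('a::euclidean_space) set \<Rightarrow> ('a \<Rightarrow> real) \<Rightarrow> bool" where
  "L2fun \<Omega> f \<longleftrightarrow> f \<in> borel_measurable (lebesgue_on \<Omega>) \<and>
                   integrable (lebesgue_on \<Omega>) (\<lambda>x. (f x)\<^sup>2)"

definition linear_L1_operator ::
  "('a::euclidean_space) set \<Rightarrow> ('a \<Rightarrow> real) set \<Rightarrow> (('a \<Rightarrow> real) \<Rightarrow> ('a \<Rightarrow> real)) \<Rightarrow> bool" where
  "linear_L1_operator \<Omega> D L \<longleftrightarrow>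
     (\<forall>u\<in>D. integrable (lebesgue_on \<Omega>) u \<and> integrable (lebesgue_on \<Omega>) (L u)) \<and>
     (\<forall>u v. u \<in> D \<longrightarrow> integrable (lebesgue_on \<Omega>) v \<longrightarrow> aeq \<Omega> u v \<longrightarrow>
            v \<in> D \<and> aeq \<Omega> (L u) (L v)) \<and>
     (\<forall>u\<in>D. \<forall>v\<in>D. \<forall>a b::real. (\<lambda>x. a * u x + b * v x) \<in> D \<and>
            aeq \<Omega> (L (\<lambda>x. a * u x + b * v x)) (\<lambda>x. a * L u x + b * L v x))"

definition densely_defined :: "('a::euclidean_space) set \<Rightarrow> ('a \<Rightarrow> real) set \<Rightarrow> bool" where
  "densely_defined \<Omega> D \<longleftrightarrow>
     (\<forall>g. integrable (lebesgue_on \<Omega>) g \<longrightarrow>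
        (\<forall>\<epsilon>>0. \<exists>u\<in>D. L1norm \<Omega> (\<lambda>x. u x - g x) < \<epsilon>))"

definition m_accretive_L1 ::
  "('a::euclidean_space) set \<Rightarrow> ('a \<Rightarrow> real) set \<Rightarrow> (('a \<Rightarrow> real) \<Rightarrow> ('a \<Rightarrow> real)) \<Rightarrow> bool" where
  "m_accretive_L1 \<Omega> D L \<longleftrightarrow>
     (\<forall>u\<in>D. \<forall>lam>0. L1norm \<Omega> u \<le> L1norm \<Omega> (\<lambda>x. u x + lam * L u x)) \<and>
     (\<forall>lam>0. \<forall>g. integrable (lebesgue_on \<Omega>) g \<longrightarrow>
        (\<exists>u\<in>D. aeq \<Omega> (\<lambda>x. u x + lam * L u x) g))"

text \<open>Iterated resolvent: resolvent_iter \<Omega> D L lam k g u means u = (I + lam L)^{-k} g (a.e.).\<close>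
inductive resolvent_iter ::
  "('a::euclidean_space) set \<Rightarrow> ('a \<Rightarrow> real) set \<Rightarrow> (('a \<Rightarrow> real) \<Rightarrow> ('a \<Rightarrow> real)) \<Rightarrow> real \<Rightarrow>
   nat \<Rightarrow> ('a \<Rightarrow> real) \<Rightarrow> ('a \<Rightarrow> real) \<Rightarrow> bool"
  for \<Omega> D L lam where
  base: "integrable (lebesgue_on \<Omega>) g \<Longrightarrow> integrable (lebesgue_on \<Omega>) u \<Longrightarrow> aeq \<Omega> u g \<Longrightarrow>
         resolvent_iter \<Omega> D L lam 0 g u"
| step: "resolvent_iter \<Omega> D L lam k g w \<Longrightarrow> u \<in> D \<Longrightarrow> aeq \<Omega> (\<lambda>x. u x + lam * L u x) w \<Longrightarrow>
         resolvent_iter \<Omega> D L lam (Suc k) g u"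

text \<open>v = e^{-tL} g, via the exponential (Crandall--Liggett) formula
  e^{-tL} g = lim_{k\<to>\<infinity>} (I + (t/k) L)^{-k} g in L^1(\<Omega>).\<close>
definition semigroup_value ::
  "('a::euclidean_space) set \<Rightarrow> ('a \<Rightarrow> real) set \<Rightarrow> (('a \<Rightarrow> real) \<Rightarrow> ('a \<Rightarrow> real)) \<Rightarrow> real \<Rightarrow>
   ('a \<Rightarrow> real) \<Rightarrow> ('a \<Rightarrow> real) \<Rightarrow> bool" where
  "semigroup_value \<Omega> D L t g v \<longleftrightarrow>
     integrable (lebesgue_on \<Omega>) v \<and>
     (\<exists>U. (\<forall>k\<ge>1. resolvent_iter \<Omega> D L (t / real k) k g (U k)) \<and>
          (\<lambda>k. L1norm \<Omega> (\<lambda>x. U k x - v x)) \<longlonglongrightarrow> 0)"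

definition sub_Markov ::
  "('a::euclidean_space) set \<Rightarrow> ('a \<Rightarrow> real) set \<Rightarrow> (('a \<Rightarrow> real) \<Rightarrow> ('a \<Rightarrow> real)) \<Rightarrow> bool" where
  "sub_Markov \<Omega> D L \<longleftrightarrow>
     (\<forall>t>0. \<forall>g v. integrable (lebesgue_on \<Omega>) g \<longrightarrow>
        (AE x in lebesgue_on \<Omega>. 0 \<le> g x \<and> g x \<le> 1) \<longrightarrow>
        semigroup_value \<Omega> D L t g v \<longrightarrow>
        (AE x in lebesgue_on \<Omega>. 0 \<le> v x \<and> v x \<le> 1))"

definition Ginv :: "('a::euclidean_space) set \<Rightarrow> ('a \<Rightarrow> 'a \<Rightarrow> real) \<Rightarrow> ('a \<Rightarrow> real) \<Rightarrow> 'a \<Rightarrow> real" where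
  "Ginv \<Omega> G f = (\<lambda>x. \<integral>y. G x y * f y \<partial>lebesgue_on \<Omega>)"

definition green_left_inverse ::
  "('a::euclidean_space) set \<Rightarrow> ('a \<Rightarrow> real) set \<Rightarrow> (('a \<Rightarrow> real) \<Rightarrow> ('a \<Rightarrow> real)) \<Rightarrow>
   ('a \<Rightarrow> 'a \<Rightarrow> real) \<Rightarrow> bool" where
  "green_left_inverse \<Omega> D L G \<longleftrightarrow>
     (\<lambda>z. G (fst z) (snd z)) \<in> borel_measurable (lebesgue_on \<Omega> \<Otimes>\<^sub>M lebesgue_on \<Omega>) \<and>
     (\<forall>g. integrable (lebesgue_on \<Omega>) g \<longrightarrow> integrable (lebesgue_on \<Omega>) (Ginv \<Omega> G g)) \<and>
     (\<forall>u\<in>D. aeq \<Omega> (Ginv \<Omega> G (L u)) u) \<and>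
     (\<forall>f g. L2fun \<Omega> f \<longrightarrow> L2fun \<Omega> g \<longrightarrow>
        L2fun \<Omega> (Ginv \<Omega> G f) \<and>
        (\<integral>x. Ginv \<Omega> G f x * g x \<partial>lebesgue_on \<Omega>) = (\<integral>x. f x * Ginv \<Omega> G g x \<partial>lebesgue_on \<Omega>))"

definition delta_pow :: "('a::euclidean_space) set \<Rightarrow> real \<Rightarrow> 'a \<Rightarrow> real" where
  "delta_pow \<Omega> \<gamma> x = infdist x (frontier \<Omega>) powr \<gamma>"

text \<open>(K2), with N = DIM('a).\<close>
definition K2 :: "('a::euclidean_space) set \<Rightarrow> ('a \<Rightarrow> 'a \<Rightarrow> real) \<Rightarrow> real \<Rightarrow> real \<Rightarrow> real \<Rightarrow> real \<Rightarrow> bool" where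
  "K2 \<Omega> G s \<gamma> c0 c1 \<longleftrightarrow>
     0 < s \<and> s \<le> 1 \<and> 0 < \<gamma> \<and> \<gamma> \<le> 1 \<and> 0 < c0 \<and> 0 < c1 \<and>
     (AE z in lebesgue_on \<Omega> \<Otimes>\<^sub>M lebesgue_on \<Omega>.
        c0 * delta_pow \<Omega> \<gamma> (fst z) * delta_pow \<Omega> \<gamma> (snd z) \<le> G (fst z) (snd z) \<and>
        G (fst z) (snd z) \<le>
          c1 / norm (fst z - snd z) powr (real DIM('a) - 2 * s)
          * min (delta_pow \<Omega> \<gamma> (fst z) / norm (fst z - snd z) powr \<gamma>) 1
          * min (delta_pow \<Omega> \<gamma> (snd z) / norm (fst z - snd z) powr \<gamma>) 1)"

text \<open>Thus \<Phi> n is an "n-th eigenfunction" (counting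
  multiplicity) normalised in L^2.\<close>
definition ordered_eigensystem ::
  "('a::euclidean_space) set \<Rightarrow> ('a \<Rightarrow> 'a \<Rightarrow> real) \<Rightarrow> (nat \<Rightarrow> 'a \<Rightarrow> real) \<Rightarrow> (nat \<Rightarrow> real) \<Rightarrow> bool" where
  "ordered_eigensystem \<Omega> G \<Phi> \<mu> \<longleftrightarrow>
     (\<forall>k\<ge>1. L2fun \<Omega> (\<Phi> k) \<and> \<mu> k \<noteq> 0 \<and> aeq \<Omega> (Ginv \<Omega> G (\<Phi> k)) (\<lambda>x. \<mu> k * \<Phi> k x)) \<and>
     (\<forall>j\<ge>1. \<forall>k\<ge>1. (\<integral>x. \<Phi> j x * \<Phi> k x \<partial>lebesgue_on \<Omega>) = (if j = k then 1 else 0)) \<and>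
     (\<forall>j\<ge>1. \<forall>k\<ge>j. \<mu> k \<le> \<mu> j) \<and>
     (\<forall>f m. L2fun \<Omega> f \<longrightarrow> m \<noteq> 0 \<longrightarrow> aeq \<Omega> (Ginv \<Omega> G f) (\<lambda>x. m * f x) \<longrightarrow>
        (\<forall>k\<ge>1. (\<integral>x. f x * \<Phi> k x \<partial>lebesgue_on \<Omega>) = 0) \<longrightarrow> aeq \<Omega> f (\<lambda>x. 0))"

end

theory Submission
  imports Defs
begin

text \<open>
  Write \<open>\<delta>(x)\<close> for the distance to the boundary. An eigenfunction \<open>\<Phi>\<close> of \<open>L^-1\<close> with
  eigenvalue \<open>m \<noteq> 0\<close> satisfies \<open>|m| |\<Phi>(x)| \<le> \<integral> G(x,y) |\<Phi>(y)| dy\<close>, and (K2) bounds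
  \<open>G(x,y)\<close> by \<open>c1 |x-y|^(2s-N) min (\<delta>(x)^\<gamma> / |x-y|^\<gamma>) 1\<close>. Composing Riesz kernels of
  orders \<open>N - a\<close> and \<open>N - b\<close> gives one of order \<open>N - a - b\<close>, so finitely many iterations of
  the inequality turn the \<open>L^2\<close> normalisation into a uniform bound on \<open>\<Phi>\<close>. Next, a bound
  \<open>|\<Phi>| \<le> B \<delta>^\<beta>\<close> improves to \<open>|\<Phi>| \<le> B' \<delta>^(min \<gamma> (\<beta> + s))\<close> by splitting the integral at
  \<open>|x - y| = \<delta>(x)/2\<close>, and \<open>\<lceil>\<gamma>/s\<rceil>\<close> such steps reach \<open>\<delta>^\<gamma>\<close>. All constants depend only on
  the eigenvalue, and a dimension count using completeness shows that the \<open>n\<close>-th eigenvalue is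
  the same in every ordered eigensystem, so one constant serves all of them.
\<close>

lemma ex_dyadic_scale:
  fixes x :: real
  assumes "1 \<le> x"
  shows "\<exists>k. 2 ^ k \<le> x \<and> x < 2 ^ Suc k"
proof -
  define k where "k = nat \<lfloor>log 2 x\<rfloor>"
  have "\<lfloor>log 2 x\<rfloor> = int k"
    using assms by (simp add: k_def)
  then have "2 powr real k \<le> x \<and> x < 2 powr (real k + 1)"
    using floor_log_eq_powr_iff[of x 2 "int k"] assms by simp
  then show ?thesis
    by (intro exI[of _ k]) (simp add: powr_add powr_realpow)
qed

lemma emeasure_lborel_ball:
  fixes c :: "'a::euclidean_space"
  assumes "0 \<le> r"
  shows "emeasure lborel (ball c r) = ennreal (r ^ DIM('a) * measure lborel (ball (0::'a) 1))"
proof -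
  have "emeasure lborel (ball c r) = emeasure lebesgue (ball c r)"
    by (simp add: emeasure_completion)
  also have "\<dots> = ennreal (r ^ DIM('a)) * emeasure lebesgue (ball (0::'a) 1)"
    using assms by (rule emeasure_lebesgue_ball_conv_unit_ball)
  also have "emeasure lebesgue (ball (0::'a) 1) = ennreal (measure lborel (ball (0::'a) 1))"
    using emeasure_lborel_ball_finite[of "0::'a" 1]
    by (simp add: emeasure_completion emeasure_eq_ennreal_measure less_top)
  finally show ?thesis
    using assms by (simp add: ennreal_mult)
qed

lemma measurable_infdist [measurable]:
  "f \<in> M \<rightarrow>\<^sub>M borel \<Longrightarrow> (\<lambda>z. infdist (f z :: 'a::euclidean_space) A) \<in> borel_measurable M"
  by (erule measurable_compose)
     (intro borel_measurable_continuous_onI continuous_on_infdist continuous_on_id)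

lemma min_le_powr:
  fixes u \<theta> :: real
  assumes "0 \<le> u" "0 \<le> \<theta>" "\<theta> \<le> 1"
  shows "min u 1 \<le> u powr \<theta>"
proof (cases "u \<le> 1")
  case True
  then have "u powr 1 \<le> u powr \<theta>" if "u \<noteq> 0"
    using assms that by (intro powr_mono') auto
  then show ?thesis
    using assms by (cases "u = 0") auto
next
  case False
  then show ?thesis
    using assms by (simp add: ge_one_powr_ge_zero)
qed

lemma min_ratio_powr_le:
  fixes d r \<gamma> \<beta> :: real
  assumes "0 < d" "0 < r" "0 \<le> \<beta>" "\<beta> \<le> \<gamma>"
  shows "min (d powr \<gamma> / r powr \<gamma>) 1 \<le> d powr \<beta> * r powr (-\<beta>)"
proof (cases "\<gamma> = 0")
  case False
  then have "0 < \<gamma>"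
    using assms by simp
  have "min (d powr \<gamma> / r powr \<gamma>) 1 \<le> (d powr \<gamma> / r powr \<gamma>) powr (\<beta> / \<gamma>)"
    using assms \<open>0 < \<gamma>\<close> by (intro min_le_powr) auto
  also have "\<dots> = (d powr \<gamma>) powr (\<beta> / \<gamma>) / (r powr \<gamma>) powr (\<beta> / \<gamma>)"
    by (rule powr_divide)
  also have "\<dots> = d powr \<beta> / r powr \<beta>"
    using \<open>0 < \<gamma>\<close> by (simp add: powr_powr)
  also have "\<dots> = d powr \<beta> * r powr (-\<beta>)"
    by (simp add: powr_minus divide_inverse)
  finally show ?thesis .
qed (use assms in simp)

lemma powr_le_scaled_powr:
  fixes d R e f :: real
  assumes "0 < d" "d \<le> R" "e \<le> f"
  shows "d powr f \<le> R powr (f - e) * d powr e"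
proof -
  have "d powr f = d powr (f - e) * d powr e"
    by (simp add: powr_add[symmetric])
  also have "\<dots> \<le> R powr (f - e) * d powr e"
    using assms by (intro mult_right_mono powr_mono2) auto
  finally show ?thesis .
qed

lemma integrable_mult_L2:
  assumes "L2fun \<Omega> f" "L2fun \<Omega> g"
  shows "integrable (lebesgue_on \<Omega>) (\<lambda>x. f x * g x)"
proof (rule Bochner_Integration.integrable_bound)
  have [measurable]: "f \<in> borel_measurable (lebesgue_on \<Omega>)" "g \<in> borel_measurable (lebesgue_on \<Omega>)"
    and "integrable (lebesgue_on \<Omega>) (\<lambda>x. (f x)\<^sup>2)" "integrable (lebesgue_on \<Omega>) (\<lambda>x. (g x)\<^sup>2)"
    using assms by (auto simp: L2fun_def)
  then show "integrable (lebesgue_on \<Omega>) (\<lambda>x. (f x)\<^sup>2 + (g x)\<^sup>2)"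
    by auto
  show "(\<lambda>x. f x * g x) \<in> borel_measurable (lebesgue_on \<Omega>)"
    by measurable
  show "AE x in lebesgue_on \<Omega>. norm (f x * g x) \<le> norm ((f x)\<^sup>2 + (g x)\<^sup>2)"
  proof (intro AE_I2)
    fix x
    have "0 \<le> (\<bar>f x\<bar> - \<bar>g x\<bar>)\<^sup>2"
      by simp
    also have "\<dots> = (f x)\<^sup>2 - 2 * (\<bar>f x\<bar> * \<bar>g x\<bar>) + (g x)\<^sup>2"
      by (simp add: power2_diff)
    finally have "\<bar>f x\<bar> * \<bar>g x\<bar> \<le> (f x)\<^sup>2 + (g x)\<^sup>2"
      using mult_nonneg_nonneg[OF abs_ge_zero[of "f x"] abs_ge_zero[of "g x"]] by linarith
    then show "norm (f x * g x) \<le> norm ((f x)\<^sup>2 + (g x)\<^sup>2)"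
      by (simp add: abs_mult)
  qed
qed

lemma L2fun_add:
  assumes "L2fun \<Omega> f" "L2fun \<Omega> g"
  shows "L2fun \<Omega> (\<lambda>x. f x + g x)"
proof -
  have [measurable]: "f \<in> borel_measurable (lebesgue_on \<Omega>)" "g \<in> borel_measurable (lebesgue_on \<Omega>)"
    and "integrable (lebesgue_on \<Omega>) (\<lambda>x. (f x)\<^sup>2)" "integrable (lebesgue_on \<Omega>) (\<lambda>x. (g x)\<^sup>2)"
    using assms by (auto simp: L2fun_def)
  then have "integrable (lebesgue_on \<Omega>) (\<lambda>x. (f x)\<^sup>2 + 2 * (f x * g x) + (g x)\<^sup>2)"
    using integrable_mult_L2[OF assms] by auto
  moreover have "(\<lambda>x. (f x + g x)\<^sup>2) = (\<lambda>x. (f x)\<^sup>2 + 2 * (f x * g x) + (g x)\<^sup>2)"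
    by (rule ext) (simp add: power2_sum)
  ultimately show ?thesis
    unfolding L2fun_def by (auto intro: borel_measurable_add)
qed

lemma L2fun_cmult: "L2fun \<Omega> f \<Longrightarrow> L2fun \<Omega> (\<lambda>x. c * f x)"
  unfolding L2fun_def by (auto simp: power_mult_distrib)

lemma L2fun_sum:
  assumes "finite A" "\<And>j. j \<in> A \<Longrightarrow> L2fun \<Omega> (\<Phi> j)"
  shows "L2fun \<Omega> (\<lambda>x. \<Sum>j\<in>A. c j * \<Phi> j x)"
  using assms
proof (induction A rule: finite_induct)
  case (insert a A)
  then have "L2fun \<Omega> (\<lambda>x. c a * \<Phi> a x + (\<Sum>j\<in>A. c j * \<Phi> j x))"
    by (intro L2fun_add L2fun_cmult) auto
  then show ?case
    using insert by simp
qed (simp add: L2fun_def)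

lemma integral_sum_mult_L2:
  assumes "finite A" "\<And>j. j \<in> A \<Longrightarrow> L2fun \<Omega> (\<Phi> j)" "L2fun \<Omega> g"
  shows "(\<integral>x. (\<Sum>j\<in>A. c j * \<Phi> j x) * g x \<partial>lebesgue_on \<Omega>)
         = (\<Sum>j\<in>A. c j * (\<integral>x. \<Phi> j x * g x \<partial>lebesgue_on \<Omega>))"
proof -
  have "(\<integral>x. (\<Sum>j\<in>A. c j * \<Phi> j x) * g x \<partial>lebesgue_on \<Omega>)
        = (\<integral>x. (\<Sum>j\<in>A. c j * (\<Phi> j x * g x)) \<partial>lebesgue_on \<Omega>)"
    by (simp add: sum_distrib_right mult.assoc)
  also have "\<dots> = (\<Sum>j\<in>A. c j * (\<integral>x. \<Phi> j x * g x \<partial>lebesgue_on \<Omega>))"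
    using assms integrable_mult_L2 by (subst Bochner_Integration.integral_sum) auto
  finally show ?thesis .
qed

lemma card_le_card_if_rows_independent:
  fixes w :: "nat \<Rightarrow> nat \<Rightarrow> real"
  assumes "finite B" "finite A"
    and "\<And>c. (\<forall>k\<in>B. (\<Sum>j\<in>A. c j * w j k) = 0) \<Longrightarrow> (\<forall>j\<in>A. c j = 0)"
  shows "card A \<le> card B"
  using assms
proof (induction B arbitrary: A w rule: finite_induct)
  case empty
  have "\<forall>j\<in>A. (\<lambda>_. 1::real) j = 0" by (rule empty.prems(2)) simp
  then have "A = {}" by auto
  then show ?case by simp
next
  case (insert b B)
  show ?case
  proof (cases "\<forall>j\<in>A. w j b = 0")
    case True
    have "card A \<le> card B"
    proof (rule insert.IH[OF insert.prems(1)])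
      fix c assume H: "\<forall>k\<in>B. (\<Sum>j\<in>A. c j * w j k) = 0"
      have "(\<Sum>j\<in>A. c j * w j b) = 0" using True by simp
      with H have "\<forall>k\<in>insert b B. (\<Sum>j\<in>A. c j * w j k) = 0" by auto
      then show "\<forall>j\<in>A. c j = 0" by (rule insert.prems(2))
    qed
    then show ?thesis using insert.hyps by simp
  next
    case False
    \<comment> \<open>eliminate column \<open>b\<close> using the pivot row \<open>j0\<close>, then recurse on the other rows\<close>
    then obtain j0 where j0: "j0 \<in> A" "w j0 b \<noteq> 0" by auto
    define A' where "A' = A - {j0}"
    define w' where "w' j k = w j0 b * w j k - w j b * w j0 k" for j k
    have fA': "finite A'" using insert.prems(1) by (simp add: A'_def)
    have "card A' \<le> card B"
    proof (rule insert.IH[OF fA', of w'])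
      fix c' assume H: "\<forall>k\<in>B. (\<Sum>j\<in>A'. c' j * w' j k) = 0"
      define c where "c j = (if j = j0 then - (\<Sum>i\<in>A'. c' i * w i b) else w j0 b * c' j)" for j
      have split: "(\<Sum>j\<in>A. c j * w j k) = c j0 * w j0 k + w j0 b * (\<Sum>j\<in>A'. c' j * w j k)" for k
      proof -
        have "(\<Sum>j\<in>A. c j * w j k) = c j0 * w j0 k + (\<Sum>j\<in>A'. c j * w j k)"
          unfolding A'_def using j0(1) insert.prems(1) by (simp add: sum.remove)
        also have "(\<Sum>j\<in>A'. c j * w j k) = w j0 b * (\<Sum>j\<in>A'. c' j * w j k)"
          unfolding sum_distrib_left by (intro sum.cong) (auto simp: c_def A'_def)
        finally show ?thesis .
      qed
      have "\<forall>k\<in>insert b B. (\<Sum>j\<in>A. c j * w j k) = 0"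
      proof
        fix k assume k: "k \<in> insert b B"
        show "(\<Sum>j\<in>A. c j * w j k) = 0"
        proof (cases "k = b")
          case True
          then show ?thesis unfolding split using j0 by (simp add: c_def algebra_simps)
        next
          case False
          then have kB: "k \<in> B" using k by simp
          have "(\<Sum>j\<in>A'. c' j * w' j k) = w j0 b * (\<Sum>j\<in>A'. c' j * w j k) - (\<Sum>i\<in>A'. c' i * w i b) * w j0 k"
            unfolding w'_def sum_distrib_left sum_distrib_right sum_subtractf[symmetric]
            by (intro sum.cong) (auto simp: algebra_simps)
          then have "w j0 b * (\<Sum>j\<in>A'. c' j * w j k) + c j0 * w j0 k = 0"
            using H kB by (simp add: c_def)
          then show ?thesis unfolding split by simp
        qed
      qed
      then have "\<forall>j\<in>A. c j = 0" by (rule insert.prems(2))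
      then show "\<forall>j\<in>A'. c' j = 0"
      proof (intro ballI)
        fix j assume "\<forall>j\<in>A. c j = 0" "j \<in> A'"
        then have "w j0 b * c' j = 0" "j \<noteq> j0" by (auto simp: A'_def c_def split: if_splits)
        then show "c' j = 0" using j0(2) by simp
      qed
    qed
    moreover have "card A = Suc (card A')" using j0 insert.prems(1) unfolding A'_def by (intro card_Suc_Diff1[symmetric]) auto
    ultimately show ?thesis using insert.hyps by simp
  qed
qed

text \<open>Since \<open>0 powr a = 0\<close>, the kernel vanishes on the diagonal.\<close>

definition riesz_kernel :: "real \<Rightarrow> 'a::euclidean_space \<Rightarrow> 'a \<Rightarrow> ennreal" where
  "riesz_kernel a x y = ennreal (norm (x - y) powr (-a))"

lemma riesz_kernel_sym: "riesz_kernel a x y = riesz_kernel a y x"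
  unfolding riesz_kernel_def by (simp add: norm_minus_commute)

lemma riesz_kernel_measurable [measurable]:
  fixes f g :: "'b \<Rightarrow> 'a::euclidean_space"
  assumes [measurable]: "f \<in> borel_measurable M" "g \<in> borel_measurable M"
  shows "(\<lambda>z. riesz_kernel a (f z) (g z)) \<in> borel_measurable M"
  unfolding riesz_kernel_def by measurable

lemma riesz_kernel_le:
  assumes "0 \<le> a" "0 < u" "u \<le> norm (x - y)"
  shows "riesz_kernel a x y \<le> ennreal (u powr (-a))"
  unfolding riesz_kernel_def using assms by (intro ennreal_leI powr_mono2') auto

text \<open>The shells \<open>a\<^sub>0 \<eta>\<^sup>k \<le> |z - y| \<le> 2 a\<^sub>0 \<eta>\<^sup>k\<close> cover \<open>A\<close>, and their contributions form a geometric series.\<close>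

lemma nn_integral_riesz_dyadic_le:
  fixes y :: "'a::euclidean_space"
  defines "n \<equiv> real DIM('a)"
  assumes b: "0 \<le> b" and a0: "0 < a0" and \<eta>: "0 < \<eta>" "\<eta> powr (n - b) < 1"
    and cover: "\<And>z. z \<in> A \<Longrightarrow> z \<noteq> y \<Longrightarrow>
                   \<exists>k. a0 * \<eta> ^ k \<le> norm (z - y) \<and> norm (z - y) \<le> 2 * (a0 * \<eta> ^ k)"
  shows "(\<integral>\<^sup>+z. indicator A z * riesz_kernel b z y \<partial>lborel)
         \<le> ennreal (3 ^ DIM('a) * measure lborel (ball (0::'a) 1) * a0 powr (n - b)
                   / (1 - \<eta> powr (n - b)))"
proof -
  define V where "V = measure lborel (ball (0::'a) 1)"
  define q where "q = \<eta> powr (n - b)"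
  define r where "r k = a0 * \<eta> ^ k" for k
  define S where "S k = {z. r k \<le> norm (z - y) \<and> norm (z - y) \<le> 2 * r k}" for k
  define c where "c k = ennreal (r k powr (-b))" for k
  have r: "0 < r k" for k
    using a0 \<eta> by (simp add: r_def)
  have S_sets: "S k \<in> sets lborel" for k
    unfolding S_def by measurable
  have shells: "indicator A z * riesz_kernel b z y \<le> (\<Sum>k. c k * indicator (S k) z)" for z
  proof (cases "z \<in> A \<and> z \<noteq> y")
    case True
    then obtain k where k: "z \<in> S k"
      using cover by (auto simp: S_def r_def)
    then have "riesz_kernel b z y \<le> c k * indicator (S k) z"
      using b r[of k] by (auto simp: c_def S_def riesz_kernel_le)
    also have "\<dots> \<le> (\<Sum>k. c k * indicator (S k) z)"
      using sum_le_suminf[OF summableI, of "{k}"] by simp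
    finally show ?thesis
      using True by simp
  qed (auto simp: indicator_def riesz_kernel_def)
  have shell_le: "c k * emeasure lborel (S k) \<le> ennreal (3 ^ DIM('a) * V * a0 powr (n - b) * q ^ k)" for k
  proof -
    have "emeasure lborel (S k) \<le> emeasure lborel (ball y (3 * r k))"
      using r[of k] by (intro emeasure_mono) (auto simp: S_def dist_norm norm_minus_commute)
    also have "\<dots> = ennreal ((3 * r k) ^ DIM('a) * V)"
      unfolding V_def using r[of k] by (intro emeasure_lborel_ball) simp
    finally have "c k * emeasure lborel (S k) \<le> c k * ennreal ((3 * r k) ^ DIM('a) * V)"
      by (rule mult_left_mono) simp
    also have "\<dots> = ennreal (r k powr (-b) * ((3 * r k) ^ DIM('a) * V))"
      unfolding c_def by (simp add: ennreal_mult V_def r less_imp_le)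
    also have "r k powr (-b) * ((3 * r k) ^ DIM('a) * V) = 3 ^ DIM('a) * V * r k powr (n - b)"
      using r[of k] by (simp add: n_def power_mult_distrib powr_realpow[symmetric] powr_diff
                                  powr_minus divide_inverse)
    also have "r k powr (n - b) = a0 powr (n - b) * q ^ k"
      using a0 \<eta> by (simp add: r_def q_def powr_mult powr_powr mult.commute flip: powr_realpow)
    finally show ?thesis by (simp add: mult.assoc)
  qed
  have "(\<integral>\<^sup>+z. indicator A z * riesz_kernel b z y \<partial>lborel)
        \<le> (\<integral>\<^sup>+z. (\<Sum>k. c k * indicator (S k) z) \<partial>lborel)"
    by (intro nn_integral_mono shells)
  also have "\<dots> = (\<Sum>k. c k * emeasure lborel (S k))"
    using S_sets by (simp add: nn_integral_suminf nn_integral_cmult_indicator)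
  also have "\<dots> \<le> (\<Sum>k. ennreal (3 ^ DIM('a) * V * a0 powr (n - b) * q ^ k))"
    by (intro suminf_le shell_le) auto
  also have "\<dots> = ennreal (3 ^ DIM('a) * V * a0 powr (n - b) / (1 - q))"
  proof (rule suminf_ennreal_eq)
    show "(\<lambda>k. 3 ^ DIM('a) * V * a0 powr (n - b) * q ^ k) sums (3 ^ DIM('a) * V * a0 powr (n - b) / (1 - q))"
      using sums_mult[OF geometric_sums[of q], of "3 ^ DIM('a) * V * a0 powr (n - b)"] \<eta>
      by (simp add: q_def divide_inverse)
  qed (simp add: V_def q_def)
  finally show ?thesis
    unfolding V_def q_def .
qed

lemma nn_integral_riesz_ball_le:
  assumes "0 \<le> b" "b < real DIM('a)"
  shows "\<exists>C\<ge>0. \<forall>(y::'a::euclidean_space) \<rho>. 0 < \<rho> \<longrightarrow>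
           (\<integral>\<^sup>+z. indicator (ball y \<rho>) z * riesz_kernel b z y \<partial>lborel)
           \<le> ennreal (C * \<rho> powr (real DIM('a) - b))"
proof -
  define n where "n = real DIM('a)"
  define q :: real where "q = (1 / 2) powr (n - b)"
  have q: "q < 1"
    using assms by (simp add: q_def n_def powr01_less_one)
  define C where "C = 3 ^ DIM('a) * measure lborel (ball (0::'a) 1) / (2 powr (n - b) * (1 - q))"
  have "0 \<le> C"
    using q by (simp add: C_def)
  moreover have "(\<integral>\<^sup>+z. indicator (ball y \<rho>) z * riesz_kernel b z y \<partial>lborel) \<le> ennreal (C * \<rho> powr (n - b))"
    if \<rho>: "0 < \<rho>" for y :: 'a and \<rho>
  proof -
    have "\<exists>k. \<rho> / 2 * (1 / 2) ^ k \<le> norm (z - y) \<and> norm (z - y) \<le> 2 * (\<rho> / 2 * (1 / 2) ^ k)"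
      if "z \<in> ball y \<rho>" "z \<noteq> y" for z
    proof -
      have "0 < norm (z - y)" "norm (z - y) < \<rho>"
        using that by (auto simp: dist_norm norm_minus_commute)
      then obtain k where "2 ^ k \<le> \<rho> / norm (z - y)" "\<rho> / norm (z - y) < 2 ^ Suc k"
        using ex_dyadic_scale[of "\<rho> / norm (z - y)"] by auto
      with \<open>0 < norm (z - y)\<close> show ?thesis
        by (intro exI[of _ k]) (auto simp: field_simps power_one_over)
    qed
    then have "(\<integral>\<^sup>+z. indicator (ball y \<rho>) z * riesz_kernel b z y \<partial>lborel)
        \<le> ennreal (3 ^ DIM('a) * measure lborel (ball (0::'a) 1) * (\<rho> / 2) powr (n - b) / (1 - q))"
      unfolding q_def n_def using assms \<rho>
      by (intro nn_integral_riesz_dyadic_le) (auto simp: powr01_less_one)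
    also have "\<dots> = ennreal (C * \<rho> powr (n - b))"
      using \<rho> by (simp add: C_def powr_divide)
    finally show ?thesis .
  qed
  ultimately show ?thesis
    unfolding n_def by blast
qed

lemma nn_integral_riesz_outside_ball_le:
  assumes "real DIM('a) < c"
  shows "\<exists>C\<ge>0. \<forall>(y::'a::euclidean_space) \<rho>. 0 < \<rho> \<longrightarrow>
           (\<integral>\<^sup>+z. indicator {z. \<rho> \<le> norm (z - y)} z * riesz_kernel c z y \<partial>lborel)
           \<le> ennreal (C * \<rho> powr (real DIM('a) - c))"
proof -
  define n where "n = real DIM('a)"
  define q :: real where "q = 2 powr (n - c)"
  have q: "q < 1"
    using assms by (simp add: q_def n_def powr_less_one)
  define C where "C = 3 ^ DIM('a) * measure lborel (ball (0::'a) 1) / (1 - q)"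
  have "0 \<le> C"
    using q by (simp add: C_def)
  moreover have "(\<integral>\<^sup>+z. indicator {z. \<rho> \<le> norm (z - y)} z * riesz_kernel c z y \<partial>lborel)
                 \<le> ennreal (C * \<rho> powr (n - c))"
    if \<rho>: "0 < \<rho>" for y :: 'a and \<rho>
  proof -
    have "\<exists>k. \<rho> * 2 ^ k \<le> norm (z - y) \<and> norm (z - y) \<le> 2 * (\<rho> * 2 ^ k)"
      if "z \<in> {z. \<rho> \<le> norm (z - y)}" for z
    proof -
      have "1 \<le> norm (z - y) / \<rho>"
        using that \<rho> by simp
      then obtain k where "2 ^ k \<le> norm (z - y) / \<rho>" "norm (z - y) / \<rho> < 2 ^ Suc k"
        using ex_dyadic_scale by blast
      with \<rho> show ?thesis
        by (intro exI[of _ k]) (auto simp: field_simps)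
    qed
    then have "(\<integral>\<^sup>+z. indicator {z. \<rho> \<le> norm (z - y)} z * riesz_kernel c z y \<partial>lborel)
        \<le> ennreal (3 ^ DIM('a) * measure lborel (ball (0::'a) 1) * \<rho> powr (n - c) / (1 - q))"
      unfolding q_def n_def using assms \<rho>
      by (intro nn_integral_riesz_dyadic_le) (auto simp: powr_less_one)
    also have "\<dots> = ennreal (C * \<rho> powr (n - c))"
      by (simp add: C_def)
    finally show ?thesis .
  qed
  ultimately show ?thesis
    unfolding n_def by blast
qed

lemma riesz_kernel_mult_le:
  assumes "0 \<le> a" "0 \<le> b"
  shows "riesz_kernel a x z * riesz_kernel b z y \<le> riesz_kernel (a + b) x z + riesz_kernel (a + b) z y"
proof (cases "x = z \<or> z = y")
  case False
  define u where "u = norm (x - z)"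
  define v where "v = norm (z - y)"
  have "0 < min u v"
    using False by (simp add: u_def v_def)
  then have "u powr (-a) * v powr (-b) \<le> min u v powr (-a) * min u v powr (-b)"
    using assms by (intro mult_mono powr_mono2') (auto simp: u_def v_def)
  also have "\<dots> = min u v powr (-(a + b))"
    by (simp add: powr_add[symmetric])
  also have "\<dots> \<le> u powr (-(a + b)) + v powr (-(a + b))"
    by (cases "u \<le> v") (auto simp: min_def)
  finally show ?thesis
    unfolding riesz_kernel_def u_def v_def
    by (simp add: ennreal_mult[symmetric] ennreal_plus[symmetric] del: ennreal_plus)
qed (auto simp: riesz_kernel_def)

lemma riesz_kernel_mult_le_regions:
  assumes a: "0 \<le> a" and b: "0 \<le> b" and xy: "x \<noteq> y"
  defines "\<rho> \<equiv> norm (x - y) / 2"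
  shows "riesz_kernel a x z * riesz_kernel b z y
         \<le> ennreal (\<rho> powr (-a)) * (indicator (ball y \<rho>) z * riesz_kernel b z y)
           + ennreal (\<rho> powr (-b)) * (indicator (ball x \<rho>) z * riesz_kernel a z x)
           + ennreal (3 powr a) * (indicator {z. \<rho> \<le> norm (z - y)} z * riesz_kernel (a + b) z y)"
    (is "_ \<le> ?near_y + ?near_x + ?far")
proof -
  have \<rho>: "0 < \<rho>"
    using xy by (simp add: \<rho>_def)
  have triangle: "2 * \<rho> \<le> norm (x - z) + norm (z - y)"
    unfolding \<rho>_def using norm_triangle_ineq[of "x - z" "z - y"] by simp
  consider "z \<in> ball y \<rho>" | "z \<in> ball x \<rho>" | "z \<notin> ball y \<rho>" "z \<notin> ball x \<rho>"
    by blast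
  then show ?thesis
  proof cases
    case 1
    then have "\<rho> \<le> norm (x - z)"
      using triangle by (simp add: dist_norm norm_minus_commute)
    then have "riesz_kernel a x z * riesz_kernel b z y \<le> ?near_y"
      using 1 a \<rho> by (simp add: mult_right_mono riesz_kernel_le)
    then show ?thesis
      by (rule order_trans) (simp add: add.assoc)
  next
    case 2
    then have "\<rho> \<le> norm (z - y)"
      using triangle by (simp add: dist_norm norm_minus_commute)
    then have "riesz_kernel b z y * riesz_kernel a z x \<le> ?near_x"
      using 2 b \<rho> by (simp add: mult_right_mono riesz_kernel_le)
    moreover have "riesz_kernel a x z = riesz_kernel a z x"
      by (rule riesz_kernel_sym)
    ultimately have "riesz_kernel a x z * riesz_kernel b z y \<le> ?near_x"
      by (metis mult.commute)
    then show ?thesis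
      by (rule order_trans) (simp add: add.commute add_increasing2)
  next
    case 3
    then have far: "\<rho> \<le> norm (z - y)" "\<rho> \<le> norm (x - z)"
      by (auto simp: dist_norm norm_minus_commute)
    have "norm (z - y) \<le> norm (x - z) + 2 * \<rho>"
      unfolding \<rho>_def using norm_triangle_ineq[of "z - x" "x - y"] by (simp add: norm_minus_commute)
    then have "norm (z - y) / 3 \<le> norm (x - z)"
      using far by simp
    then have "norm (x - z) powr (-a) \<le> (norm (z - y) / 3) powr (-a)"
      using far \<rho> a by (intro powr_mono2') auto
    also have "\<dots> = 3 powr a * norm (z - y) powr (-a)"
      by (simp add: powr_divide powr_minus_divide)
    finally have "norm (x - z) powr (-a) * norm (z - y) powr (-b)
                  \<le> 3 powr a * norm (z - y) powr (-a) * norm (z - y) powr (-b)"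
      by (rule mult_right_mono) simp
    also have "\<dots> = 3 powr a * norm (z - y) powr (-(a + b))"
      by (simp add: powr_add[symmetric] mult.assoc)
    finally have "norm (x - z) powr (-a) * norm (z - y) powr (-b) \<le> 3 powr a * norm (z - y) powr (-(a + b))" .
    then have "riesz_kernel a x z * riesz_kernel b z y \<le> ?far"
      unfolding riesz_kernel_def using far by (auto simp: ennreal_mult[symmetric] intro!: ennreal_leI)
    then show ?thesis
      by (rule order_trans) simp
  qed
qed

lemma nn_integral_riesz_composition_le:
  assumes a: "0 \<le> a" "a < real DIM('a)" and b: "0 \<le> b" "b < real DIM('a)"
    and ab: "real DIM('a) < a + b"
  shows "\<exists>C\<ge>0. \<forall>x y::'a::euclidean_space. x \<noteq> y \<longrightarrow>
           (\<integral>\<^sup>+z. riesz_kernel a x z * riesz_kernel b z y \<partial>lborel)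
           \<le> ennreal C * riesz_kernel (a + b - real DIM('a)) x y"
proof -
  define n where "n = real DIM('a)"
  obtain Ca where Ca: "Ca \<ge> 0" "\<And>y::'a. \<And>\<rho>. 0 < \<rho> \<Longrightarrow>
      (\<integral>\<^sup>+z. indicator (ball y \<rho>) z * riesz_kernel a z y \<partial>lborel) \<le> ennreal (Ca * \<rho> powr (n - a))"
    using nn_integral_riesz_ball_le[OF a] unfolding n_def by blast
  obtain Cb where Cb: "Cb \<ge> 0" "\<And>y::'a. \<And>\<rho>. 0 < \<rho> \<Longrightarrow>
      (\<integral>\<^sup>+z. indicator (ball y \<rho>) z * riesz_kernel b z y \<partial>lborel) \<le> ennreal (Cb * \<rho> powr (n - b))"
    using nn_integral_riesz_ball_le[OF b] unfolding n_def by blast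
  obtain Cc where Cc: "Cc \<ge> 0" "\<And>y::'a. \<And>\<rho>. 0 < \<rho> \<Longrightarrow>
      (\<integral>\<^sup>+z. indicator {z. \<rho> \<le> norm (z - y)} z * riesz_kernel (a + b) z y \<partial>lborel)
      \<le> ennreal (Cc * \<rho> powr (n - (a + b)))"
    using nn_integral_riesz_outside_ball_le[OF ab] unfolding n_def by blast
  define C where "C = (Cb + Ca + 3 powr a * Cc) / 2 powr (n - a - b)"
  have "0 \<le> C"
    using Ca Cb Cc by (simp add: C_def)
  moreover have "(\<integral>\<^sup>+z. riesz_kernel a x z * riesz_kernel b z y \<partial>lborel)
                 \<le> ennreal C * riesz_kernel (a + b - n) x y" if xy: "x \<noteq> y" for x y :: 'a
  proof -
    define \<rho> where "\<rho> = norm (x - y) / 2"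
    have \<rho>: "0 < \<rho>"
      using xy by (simp add: \<rho>_def)
    define g1 where "g1 z = indicator (ball y \<rho>) z * riesz_kernel b z y" for z
    define g2 where "g2 z = indicator (ball x \<rho>) z * riesz_kernel a z x" for z
    define g3 where "g3 z = indicator {z. \<rho> \<le> norm (z - y)} z * riesz_kernel (a + b) z y" for z
    have [measurable]: "ball x \<rho> \<in> sets borel" "ball y \<rho> \<in> sets borel"
      by (simp_all add: borel_open)
    have [measurable]: "g1 \<in> borel_measurable lborel" "g2 \<in> borel_measurable lborel"
      "g3 \<in> borel_measurable lborel"
      unfolding g1_def g2_def g3_def by measurable
    have "(\<integral>\<^sup>+z. riesz_kernel a x z * riesz_kernel b z y \<partial>lborel)
        \<le> (\<integral>\<^sup>+z. ennreal (\<rho> powr (-a)) * g1 z + ennreal (\<rho> powr (-b)) * g2 z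
                  + ennreal (3 powr a) * g3 z \<partial>lborel)"
      using riesz_kernel_mult_le_regions[OF a(1) b(1) xy]
      unfolding \<rho>_def[symmetric] g1_def g2_def g3_def by (intro nn_integral_mono)
    also have "\<dots> = ennreal (\<rho> powr (-a)) * integral\<^sup>N lborel g1
        + ennreal (\<rho> powr (-b)) * integral\<^sup>N lborel g2 + ennreal (3 powr a) * integral\<^sup>N lborel g3"
      by (simp add: nn_integral_add nn_integral_cmult)
    also have "\<dots> \<le> ennreal (\<rho> powr (-a)) * ennreal (Cb * \<rho> powr (n - b))
                    + ennreal (\<rho> powr (-b)) * ennreal (Ca * \<rho> powr (n - a))
                    + ennreal (3 powr a) * ennreal (Cc * \<rho> powr (n - (a + b)))"
      unfolding g1_def g2_def g3_def by (intro add_mono mult_left_mono Ca(2) Cb(2) Cc(2) \<rho>) auto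
    also have "\<dots> = ennreal ((Cb + Ca + 3 powr a * Cc) * \<rho> powr (n - a - b))"
    proof -
      have "\<rho> powr (-a) * (Cb * \<rho> powr (n - b)) + \<rho> powr (-b) * (Ca * \<rho> powr (n - a))
            + 3 powr a * (Cc * \<rho> powr (n - (a + b))) = (Cb + Ca + 3 powr a * Cc) * \<rho> powr (n - a - b)"
        by (simp add: powr_add[symmetric] algebra_simps)
      then show ?thesis
        using Ca Cb Cc by (simp add: ennreal_mult[symmetric] ennreal_plus[symmetric] del: ennreal_plus)
    qed
    also have "(Cb + Ca + 3 powr a * Cc) * \<rho> powr (n - a - b) = C * norm (x - y) powr (n - a - b)"
      by (simp add: C_def \<rho>_def powr_divide)
    also have "ennreal \<dots> = ennreal C * riesz_kernel (a + b - n) x y"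
      using \<open>0 \<le> C\<close> by (simp add: riesz_kernel_def ennreal_mult diff_diff_eq)
    finally show ?thesis .
  qed
  ultimately show ?thesis
    unfolding n_def by blast
qed


locale K2_green_function =
  fixes \<Omega> :: "'a::euclidean_space set" and G :: "'a \<Rightarrow> 'a \<Rightarrow> real" and s \<gamma> c0 c1 :: real
  assumes domain: "bounded_domain \<Omega>"
    and green_measurable: "(\<lambda>z. G (fst z) (snd z)) \<in> borel_measurable (lebesgue_on \<Omega> \<Otimes>\<^sub>M lebesgue_on \<Omega>)"
    and K2: "K2 \<Omega> G s \<gamma> c0 c1"
    and DIM_ge_2: "2 \<le> DIM('a)"
begin

abbreviation "M \<equiv> lebesgue_on \<Omega>"
abbreviation "bdist x \<equiv> infdist x (frontier \<Omega>)"

definition R :: real where "R = diameter \<Omega> + 1"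

lemma measurable_id_M [measurable]: "(\<lambda>x. x) \<in> M \<rightarrow>\<^sub>M borel"
  by (intro measurable_restrict_space1 measurable_completion) simp

lemma domain_open: "open \<Omega>" and domain_bounded: "bounded \<Omega>" and domain_nonempty: "\<Omega> \<noteq> {}"
  using domain by (auto simp: bounded_domain_def)

lemma sets_domain: "\<Omega> \<in> sets lebesgue"
  by (simp add: domain_open borel_open sets_completionI_sets)

lemma finite_measure_M: "finite_measure M"
  by (intro finite_measure_lebesgue_on bounded_set_imp_lmeasurable domain_bounded sets_domain)

sublocale MM: pair_sigma_finite M M
proof -
  interpret finite_measure M
    by (rule finite_measure_M)
  show "pair_sigma_finite M M"
    by unfold_locales
qed

lemma s_pos: "0 < s" and s_le_1: "s \<le> 1" and \<gamma>_pos: "0 < \<gamma>"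
  and c0_pos: "0 < c0" and c1_pos: "0 < c1"
  using K2 by (auto simp: K2_def)

lemma real_DIM_ge_2: "2 \<le> real DIM('a)"
  using DIM_ge_2 by simp

lemma R_pos: "0 < R"
  using diameter_ge_0[OF domain_bounded] by (simp add: R_def)

lemma norm_diff_less_R: "x \<in> \<Omega> \<Longrightarrow> y \<in> \<Omega> \<Longrightarrow> norm (x - y) < R"
  using diameter_bounded_bound[OF domain_bounded, of x y] by (simp add: R_def dist_norm)

lemma frontier_nonempty: "frontier \<Omega> \<noteq> {}"
proof
  assume "frontier \<Omega> = {}"
  then have "\<Omega> = UNIV"
    using domain_nonempty frontier_eq_empty by blast
  then show False
    using domain_bounded not_bounded_UNIV by simp
qed

lemma bdist_pos: "x \<in> \<Omega> \<Longrightarrow> 0 < bdist x"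
  using domain_open frontier_nonempty
  by (intro infdist_pos_not_in_closed) (auto simp: frontier_def interior_open)

lemma bdist_le_R:
  assumes "x \<in> \<Omega>"
  shows "bdist x \<le> R"
proof -
  obtain p where p: "p \<in> frontier \<Omega>"
    using frontier_nonempty by blast
  have "bdist x \<le> dist x p"
    by (rule infdist_le[OF p])
  also have "\<dots> \<le> diameter (closure \<Omega>)"
    using assms p domain_bounded
    by (intro diameter_bounded_bound) (auto simp: frontier_def closure_subset[THEN subsetD])
  finally show ?thesis
    by (simp add: R_def diameter_closure[OF domain_bounded])
qed

lemma bdist_le_add_norm: "bdist z \<le> bdist x + norm (x - z)"
  using infdist_triangle[of z "frontier \<Omega>" x] by (simp add: dist_norm norm_minus_commute)

lemma nn_integral_M_le_lborel: "integral\<^sup>N M f \<le> integral\<^sup>N lborel f"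
proof -
  have "integral\<^sup>N M f = (\<integral>\<^sup>+z. f z * indicator \<Omega> z \<partial>lborel)"
    by (simp add: nn_integral_restrict_space sets_domain nn_integral_completion)
  also have "\<dots> \<le> integral\<^sup>N lborel f"
    by (intro nn_integral_mono) (auto simp: indicator_def)
  finally show ?thesis .
qed

lemma AE_M_neq: "AE y in M. y \<noteq> x"
proof -
  have "{x} \<in> null_sets lebesgue"
    by (simp add: null_sets_def emeasure_completion)
  then have "{x} \<inter> \<Omega> \<in> null_sets lebesgue"
    using sets_domain by (rule null_set_Int2)
  then have "{x} \<inter> \<Omega> \<in> null_sets M"
    by (simp add: null_sets_restrict_space sets_domain)
  from AE_not_in[OF this] show ?thesis
    by (rule AE_mp) (intro AE_I2, auto)
qed

text \<open>The upper bound of (K2) with its last factor, which is at most 1, dropped.\<close>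

definition green_majorant :: "'a \<Rightarrow> 'a \<Rightarrow> real" where
  "green_majorant x z =
     c1 * norm (x - z) powr (-(real DIM('a) - 2 * s)) * min (bdist x powr \<gamma> / norm (x - z) powr \<gamma>) 1"

definition riesz_potential :: "real \<Rightarrow> ('a \<Rightarrow> real) \<Rightarrow> 'a \<Rightarrow> ennreal" where
  "riesz_potential a f x = (\<integral>\<^sup>+y. riesz_kernel a x y * ennreal \<bar>f y\<bar> \<partial>M)"

lemma green_majorant_nonneg: "0 \<le> green_majorant x z"
  using c1_pos by (simp add: green_majorant_def)

lemma green_majorant_measurable [measurable]:
  assumes [measurable]: "f \<in> borel_measurable N" "g \<in> borel_measurable N"
  shows "(\<lambda>z. green_majorant (f z) (g z)) \<in> borel_measurable N"
  unfolding green_majorant_def by measurable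

lemma riesz_potential_measurable [measurable]:
  assumes [measurable]: "f \<in> borel_measurable M"
  shows "riesz_potential a f \<in> borel_measurable M"
  unfolding riesz_potential_def by measurable

lemma AE_green_le_majorant: "AE x in M. AE z in M. 0 \<le> G x z \<and> G x z \<le> green_majorant x z"
proof -
  have "AE p in M \<Otimes>\<^sub>M M. 0 \<le> G (fst p) (snd p) \<and> G (fst p) (snd p) \<le> green_majorant (fst p) (snd p)"
    using K2 unfolding K2_def
  proof (elim conjE AE_mp, intro AE_I2 impI conjI)
    fix p :: "'a \<times> 'a"
    define x z where "x = fst p" and "z = snd p"
    define A where "A = c1 / norm (x - z) powr (real DIM('a) - 2 * s)
                        * min (delta_pow \<Omega> \<gamma> x / norm (x - z) powr \<gamma>) 1"
    define B where "B = min (delta_pow \<Omega> \<gamma> z / norm (x - z) powr \<gamma>) 1"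
    assume "c0 * delta_pow \<Omega> \<gamma> (fst p) * delta_pow \<Omega> \<gamma> (snd p) \<le> G (fst p) (snd p) \<and>
            G (fst p) (snd p) \<le> c1 / norm (fst p - snd p) powr (real DIM('a) - 2 * s) *
              min (delta_pow \<Omega> \<gamma> (fst p) / norm (fst p - snd p) powr \<gamma>) 1 *
              min (delta_pow \<Omega> \<gamma> (snd p) / norm (fst p - snd p) powr \<gamma>) 1"
    then have lower: "c0 * delta_pow \<Omega> \<gamma> x * delta_pow \<Omega> \<gamma> z \<le> G x z" and upper: "G x z \<le> A * B"
      by (simp_all add: x_def z_def A_def B_def)
    have "0 \<le> c0 * delta_pow \<Omega> \<gamma> x * delta_pow \<Omega> \<gamma> z"
      using c0_pos by (simp add: delta_pow_def)
    then show "0 \<le> G (fst p) (snd p)"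
      using lower unfolding x_def z_def by linarith
    have "0 \<le> A" "B \<le> 1"
      using c1_pos by (simp_all add: A_def B_def delta_pow_def)
    moreover have "A = green_majorant x z"
      by (simp add: A_def green_majorant_def delta_pow_def divide_powr_uminus)
    ultimately show "G (fst p) (snd p) \<le> green_majorant (fst p) (snd p)"
      using upper mult_left_le[of B A] unfolding x_def z_def by linarith
  qed
  from MM.AE_pair[OF this] show ?thesis
    by simp
qed

lemma green_majorant_le_riesz_kernel:
  assumes t: "0 < t" "t \<le> 2 * s" and x: "x \<in> \<Omega>" and z: "z \<in> \<Omega>"
  shows "ennreal (green_majorant x z) \<le> ennreal (c1 * R powr (2 * s - t)) * riesz_kernel (real DIM('a) - t) x z"
proof (cases "x = z")
  case False
  define r where "r = norm (x - z)"
  have r: "0 < r" "r < R"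
    using False norm_diff_less_R[OF x z] by (auto simp: r_def)
  have "green_majorant x z \<le> c1 * r powr (-(real DIM('a) - 2 * s))"
    unfolding green_majorant_def r_def[symmetric] using c1_pos by (intro mult_left_le) auto
  also have "r powr (-(real DIM('a) - 2 * s)) = r powr (2 * s - t) * r powr (-(real DIM('a) - t))"
    by (simp add: powr_add[symmetric])
  also have "\<dots> \<le> R powr (2 * s - t) * r powr (-(real DIM('a) - t))"
    using r t by (intro mult_right_mono powr_mono2) auto
  finally show ?thesis
    using c1_pos by (simp add: riesz_kernel_def r_def ennreal_mult[symmetric] mult.assoc)
qed (simp add: green_majorant_def riesz_kernel_def)

lemma riesz_kernel_integral_bounded:
  assumes "0 \<le> c" "c < real DIM('a)"
  shows "\<exists>C\<ge>0. \<forall>x\<in>\<Omega>. (\<integral>\<^sup>+z. riesz_kernel c x z \<partial>M) \<le> ennreal C"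
proof -
  obtain C where C: "C \<ge> 0" "\<And>y::'a. \<And>\<rho>. 0 < \<rho> \<Longrightarrow>
      (\<integral>\<^sup>+z. indicator (ball y \<rho>) z * riesz_kernel c z y \<partial>lborel) \<le> ennreal (C * \<rho> powr (real DIM('a) - c))"
    using nn_integral_riesz_ball_le[OF assms] by blast
  have "(\<integral>\<^sup>+z. riesz_kernel c x z \<partial>M) \<le> ennreal (C * R powr (real DIM('a) - c))" if x: "x \<in> \<Omega>" for x
  proof -
    have "(\<integral>\<^sup>+z. riesz_kernel c x z \<partial>M) = (\<integral>\<^sup>+z. indicator (ball x R) z * riesz_kernel c z x \<partial>M)"
      using norm_diff_less_R[OF x]
      by (intro nn_integral_cong) (simp add: riesz_kernel_sym[of c x] dist_norm)
    also have "\<dots> \<le> (\<integral>\<^sup>+z. indicator (ball x R) z * riesz_kernel c z x \<partial>lborel)"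
      by (rule nn_integral_M_le_lborel)
    also have "\<dots> \<le> ennreal (C * R powr (real DIM('a) - c))"
      by (rule C(2)[OF R_pos])
    finally show ?thesis .
  qed
  then show ?thesis
    using C(1) by (intro exI[of _ "C * R powr (real DIM('a) - c)"]) auto
qed

lemma riesz_composition_bounded:
  assumes "0 \<le> a" "0 \<le> b" "a + b < real DIM('a)"
  shows "\<exists>C\<ge>0. \<forall>x\<in>\<Omega>. \<forall>y\<in>\<Omega>. (\<integral>\<^sup>+z. riesz_kernel a x z * riesz_kernel b z y \<partial>M) \<le> ennreal C"
proof -
  obtain C where C: "C \<ge> 0" "\<And>x. x \<in> \<Omega> \<Longrightarrow> (\<integral>\<^sup>+z. riesz_kernel (a + b) x z \<partial>M) \<le> ennreal C"
    using riesz_kernel_integral_bounded[of "a + b"] assms by auto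
  have "(\<integral>\<^sup>+z. riesz_kernel a x z * riesz_kernel b z y \<partial>M) \<le> ennreal (C + C)"
    if "x \<in> \<Omega>" "y \<in> \<Omega>" for x y
  proof -
    have "(\<integral>\<^sup>+z. riesz_kernel a x z * riesz_kernel b z y \<partial>M)
          \<le> (\<integral>\<^sup>+z. riesz_kernel (a + b) x z + riesz_kernel (a + b) y z \<partial>M)"
      using assms by (intro nn_integral_mono) (simp add: riesz_kernel_mult_le riesz_kernel_sym[of _ y])
    also have "\<dots> = (\<integral>\<^sup>+z. riesz_kernel (a + b) x z \<partial>M) + (\<integral>\<^sup>+z. riesz_kernel (a + b) y z \<partial>M)"
      by (rule nn_integral_add) auto
    also have "\<dots> \<le> ennreal C + ennreal C"
      using C that by (intro add_mono) auto
    also have "\<dots> = ennreal (C + C)"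
      using C by (simp del: ennreal_plus add: ennreal_plus[symmetric])
    finally show ?thesis .
  qed
  then show ?thesis
    using C(1) by (intro exI[of _ "C + C"]) auto
qed

lemma riesz_composition_le:
  assumes "0 \<le> a" "a < real DIM('a)" "0 \<le> b" "b < real DIM('a)" "real DIM('a) < a + b"
  shows "\<exists>C\<ge>0. \<forall>x y. x \<noteq> y \<longrightarrow>
           (\<integral>\<^sup>+z. riesz_kernel a x z * riesz_kernel b z y \<partial>M)
           \<le> ennreal C * riesz_kernel (a + b - real DIM('a)) x y"
  using nn_integral_riesz_composition_le[OF assms] nn_integral_M_le_lborel order_trans by meson

lemma nn_integral_riesz_potential:
  assumes [measurable]: "f \<in> borel_measurable M"
  shows "(\<integral>\<^sup>+z. riesz_kernel b x z * riesz_potential a f z \<partial>M)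
         = (\<integral>\<^sup>+y. (\<integral>\<^sup>+z. riesz_kernel b x z * riesz_kernel a z y \<partial>M) * ennreal \<bar>f y\<bar> \<partial>M)"
proof -
  have "(\<integral>\<^sup>+z. riesz_kernel b x z * riesz_potential a f z \<partial>M)
        = (\<integral>\<^sup>+z. (\<integral>\<^sup>+y. riesz_kernel b x z * (riesz_kernel a z y * ennreal \<bar>f y\<bar>) \<partial>M) \<partial>M)"
    unfolding riesz_potential_def by (intro nn_integral_cong nn_integral_cmult[symmetric]) measurable
  also have "\<dots> = (\<integral>\<^sup>+y. (\<integral>\<^sup>+z. riesz_kernel b x z * (riesz_kernel a z y * ennreal \<bar>f y\<bar>) \<partial>M) \<partial>M)"
    by (rule MM.Fubini'[symmetric]) measurable
  also have "\<dots> = (\<integral>\<^sup>+y. (\<integral>\<^sup>+z. riesz_kernel b x z * riesz_kernel a z y \<partial>M) * ennreal \<bar>f y\<bar> \<partial>M)"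
    by (intro nn_integral_cong) (simp add: nn_integral_multc[symmetric] mult.assoc)
  finally show ?thesis .
qed

lemma eigenfunction_le_majorant_potential:
  assumes eig: "aeq \<Omega> (Ginv \<Omega> G \<Phi>) (\<lambda>x. m * \<Phi> x)"
    and g: "AE z in M. ennreal \<bar>\<Phi> z\<bar> \<le> g z"
  shows "AE x in M. ennreal (\<bar>m\<bar> * \<bar>\<Phi> x\<bar>) \<le> (\<integral>\<^sup>+z. ennreal (green_majorant x z) * g z \<partial>M)"
  using AE_green_le_majorant eig[unfolded aeq_def]
proof (elim AE_mp, intro AE_I2 impI)
  fix x
  assume G: "AE z in M. 0 \<le> G x z \<and> G x z \<le> green_majorant x z"
    and "Ginv \<Omega> G \<Phi> x = m * \<Phi> x"
  then have "ennreal (\<bar>m\<bar> * \<bar>\<Phi> x\<bar>) = ennreal (norm (\<integral>z. G x z * \<Phi> z \<partial>M))"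
    by (simp add: Ginv_def abs_mult)
  also have "\<dots> \<le> (\<integral>\<^sup>+z. norm (G x z * \<Phi> z) \<partial>M)"
  proof (cases "integrable M (\<lambda>z. G x z * \<Phi> z)")
    case True
    then show ?thesis
      by (rule integral_norm_bound_ennreal)
  qed (simp add: not_integrable_integral_eq)
  also have "\<dots> \<le> (\<integral>\<^sup>+z. ennreal (green_majorant x z) * g z \<partial>M)"
    using G g
  proof (intro nn_integral_mono_AE, elim AE_mp, intro AE_I2 impI)
    fix z
    assume "0 \<le> G x z \<and> G x z \<le> green_majorant x z" and gz: "ennreal \<bar>\<Phi> z\<bar> \<le> g z"
    then have "ennreal (norm (G x z * \<Phi> z)) \<le> ennreal (green_majorant x z) * ennreal \<bar>\<Phi> z\<bar>"
      using green_majorant_nonneg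
      by (simp add: abs_mult mult_right_mono ennreal_mult[symmetric] ennreal_leI)
    also have "\<dots> \<le> ennreal (green_majorant x z) * g z"
      by (rule mult_left_mono[OF gz]) simp
    finally show "ennreal (norm (G x z * \<Phi> z)) \<le> ennreal (green_majorant x z) * g z" .
  qed
  finally show "ennreal (\<bar>m\<bar> * \<bar>\<Phi> x\<bar>) \<le> (\<integral>\<^sup>+z. ennreal (green_majorant x z) * g z \<partial>M)" .
qed

lemma eigenfunction_le_riesz_potential:
  assumes t: "0 < t" "t \<le> 2 * s" and m: "m \<noteq> 0"
    and eig: "aeq \<Omega> (Ginv \<Omega> G \<Phi>) (\<lambda>x. m * \<Phi> x)"
    and g: "AE z in M. ennreal \<bar>\<Phi> z\<bar> \<le> g z" and [measurable]: "g \<in> borel_measurable M"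
  shows "AE x in M. ennreal \<bar>\<Phi> x\<bar>
           \<le> ennreal (c1 * R powr (2 * s - t) / \<bar>m\<bar>) * (\<integral>\<^sup>+z. riesz_kernel (real DIM('a) - t) x z * g z \<partial>M)"
  using eigenfunction_le_majorant_potential[OF eig g] AE_space
proof (elim AE_mp, intro AE_I2 impI)
  fix x
  define c where "c = c1 * R powr (2 * s - t)"
  have c: "0 \<le> c"
    using c1_pos by (simp add: c_def)
  assume x: "x \<in> space M"
  assume "ennreal (\<bar>m\<bar> * \<bar>\<Phi> x\<bar>) \<le> (\<integral>\<^sup>+z. ennreal (green_majorant x z) * g z \<partial>M)"
  also have "(\<integral>\<^sup>+z. ennreal (green_majorant x z) * g z \<partial>M)
             \<le> (\<integral>\<^sup>+z. ennreal c * (riesz_kernel (real DIM('a) - t) x z * g z) \<partial>M)"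
    unfolding c_def mult.assoc[symmetric] using x
    by (intro nn_integral_mono mult_right_mono green_majorant_le_riesz_kernel t) auto
  also have "\<dots> = ennreal c * (\<integral>\<^sup>+z. riesz_kernel (real DIM('a) - t) x z * g z \<partial>M)"
    by (rule nn_integral_cmult) measurable
  finally have "ennreal (1 / \<bar>m\<bar>) * ennreal (\<bar>m\<bar> * \<bar>\<Phi> x\<bar>)
                \<le> ennreal (1 / \<bar>m\<bar>) * (ennreal c * (\<integral>\<^sup>+z. riesz_kernel (real DIM('a) - t) x z * g z \<partial>M))"
    by (rule mult_left_mono) simp
  moreover have "ennreal (c / \<bar>m\<bar>) = ennreal (1 / \<bar>m\<bar>) * ennreal c"
    using c by (simp add: ennreal_mult[symmetric])
  ultimately show "ennreal \<bar>\<Phi> x\<bar> \<le> ennreal (c / \<bar>m\<bar>) * (\<integral>\<^sup>+z. riesz_kernel (real DIM('a) - t) x z * g z \<partial>M)"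
    using m by (simp add: ennreal_mult[symmetric] mult.assoc)
qed

lemma eigenfunction_le_iterated_potential:
  assumes t: "0 < t" "t \<le> 2 * s" and m: "m \<noteq> 0" and [measurable]: "\<Phi> \<in> borel_measurable M"
    and eig: "aeq \<Omega> (Ginv \<Omega> G \<Phi>) (\<lambda>x. m * \<Phi> x)"
    and bound: "AE z in M. ennreal \<bar>\<Phi> z\<bar> \<le> A * riesz_potential a \<Phi> z"
  shows "AE x in M. ennreal \<bar>\<Phi> x\<bar> \<le> ennreal (c1 * R powr (2 * s - t) / \<bar>m\<bar>) * A *
           (\<integral>\<^sup>+y. (\<integral>\<^sup>+z. riesz_kernel (real DIM('a) - t) x z * riesz_kernel a z y \<partial>M) * ennreal \<bar>\<Phi> y\<bar> \<partial>M)"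
proof -
  have "AE x in M. ennreal \<bar>\<Phi> x\<bar> \<le> ennreal (c1 * R powr (2 * s - t) / \<bar>m\<bar>) *
          (\<integral>\<^sup>+z. riesz_kernel (real DIM('a) - t) x z * (A * riesz_potential a \<Phi> z) \<partial>M)"
    by (rule eigenfunction_le_riesz_potential[OF t m eig bound]) measurable
  moreover have "(\<integral>\<^sup>+z. riesz_kernel (real DIM('a) - t) x z * (A * riesz_potential a \<Phi> z) \<partial>M)
        = A * (\<integral>\<^sup>+z. riesz_kernel (real DIM('a) - t) x z * riesz_potential a \<Phi> z \<partial>M)" for x
    by (subst nn_integral_cmult[symmetric]) (auto simp: mult.left_commute)
  ultimately show ?thesis
    by (simp add: nn_integral_riesz_potential mult.assoc)
qed

lemma eigenfunction_le_riesz_potential_step: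
  assumes t: "0 < t" "t \<le> 2 * s" and a: "t < a" "a < real DIM('a)" and m: "m \<noteq> 0"
  shows "\<exists>K\<ge>0. \<forall>\<Phi> A. \<Phi> \<in> borel_measurable M \<longrightarrow> aeq \<Omega> (Ginv \<Omega> G \<Phi>) (\<lambda>x. m * \<Phi> x) \<longrightarrow>
           (AE z in M. ennreal \<bar>\<Phi> z\<bar> \<le> A * riesz_potential a \<Phi> z) \<longrightarrow>
           (AE x in M. ennreal \<bar>\<Phi> x\<bar> \<le> A * ennreal K * riesz_potential (a - t) \<Phi> x)"
proof -
  obtain C where C: "C \<ge> 0" "\<And>x y. x \<noteq> y \<Longrightarrow>
      (\<integral>\<^sup>+z. riesz_kernel (real DIM('a) - t) x z * riesz_kernel a z y \<partial>M) \<le> ennreal C * riesz_kernel (a - t) x y"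
    using riesz_composition_le[of "real DIM('a) - t" a] t a real_DIM_ge_2 s_le_1 by auto
  define c where "c = c1 * R powr (2 * s - t) / \<bar>m\<bar>"
  have c: "0 \<le> c"
    using c1_pos by (simp add: c_def)
  have "AE x in M. ennreal \<bar>\<Phi> x\<bar> \<le> A * ennreal (c * C) * riesz_potential (a - t) \<Phi> x"
    if [measurable]: "\<Phi> \<in> borel_measurable M" and eig: "aeq \<Omega> (Ginv \<Omega> G \<Phi>) (\<lambda>x. m * \<Phi> x)"
      and bound: "AE z in M. ennreal \<bar>\<Phi> z\<bar> \<le> A * riesz_potential a \<Phi> z" for \<Phi> A
    using eigenfunction_le_iterated_potential[OF t m that, folded c_def]
  proof (elim AE_mp, intro AE_I2 impI)
    fix x
    assume H: "ennreal \<bar>\<Phi> x\<bar> \<le> ennreal c * A *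
        (\<integral>\<^sup>+y. (\<integral>\<^sup>+z. riesz_kernel (real DIM('a) - t) x z * riesz_kernel a z y \<partial>M) * ennreal \<bar>\<Phi> y\<bar> \<partial>M)"
    have "(\<integral>\<^sup>+y. (\<integral>\<^sup>+z. riesz_kernel (real DIM('a) - t) x z * riesz_kernel a z y \<partial>M) * ennreal \<bar>\<Phi> y\<bar> \<partial>M)
          \<le> (\<integral>\<^sup>+y. ennreal C * (riesz_kernel (a - t) x y * ennreal \<bar>\<Phi> y\<bar>) \<partial>M)"
      using AE_M_neq[of x]
    proof (intro nn_integral_mono_AE, elim AE_mp, intro AE_I2 impI)
      fix y
      assume "y \<noteq> x"
      then show "(\<integral>\<^sup>+z. riesz_kernel (real DIM('a) - t) x z * riesz_kernel a z y \<partial>M) * ennreal \<bar>\<Phi> y\<bar>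
                 \<le> ennreal C * (riesz_kernel (a - t) x y * ennreal \<bar>\<Phi> y\<bar>)"
        using C(2)[of x y] by (simp add: mult.assoc[symmetric] mult_right_mono)
    qed
    also have "\<dots> = ennreal C * riesz_potential (a - t) \<Phi> x"
      unfolding riesz_potential_def by (rule nn_integral_cmult) measurable
    finally have "ennreal c * A * (\<integral>\<^sup>+y. (\<integral>\<^sup>+z. riesz_kernel (real DIM('a) - t) x z * riesz_kernel a z y \<partial>M)
                     * ennreal \<bar>\<Phi> y\<bar> \<partial>M) \<le> ennreal c * A * (ennreal C * riesz_potential (a - t) \<Phi> x)"
      by (rule mult_left_mono) simp
    from order_trans[OF H this]
    show "ennreal \<bar>\<Phi> x\<bar> \<le> A * ennreal (c * C) * riesz_potential (a - t) \<Phi> x"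
      using c C(1) by (simp add: ennreal_mult ac_simps)
  qed
  then show ?thesis
    using c C(1) by (intro exI[of _ "c * C"]) auto
qed

lemma eigenfunction_le_L1_norm:
  assumes t: "0 < t" "t \<le> 2 * s" and a: "0 \<le> a" "a < t" and m: "m \<noteq> 0"
  shows "\<exists>K\<ge>0. \<forall>\<Phi> A. \<Phi> \<in> borel_measurable M \<longrightarrow> aeq \<Omega> (Ginv \<Omega> G \<Phi>) (\<lambda>x. m * \<Phi> x) \<longrightarrow>
           (AE z in M. ennreal \<bar>\<Phi> z\<bar> \<le> A * riesz_potential a \<Phi> z) \<longrightarrow>
           (AE x in M. ennreal \<bar>\<Phi> x\<bar> \<le> A * ennreal K * (\<integral>\<^sup>+y. ennreal \<bar>\<Phi> y\<bar> \<partial>M))"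
proof -
  obtain C where C: "C \<ge> 0" "\<And>x y. x \<in> \<Omega> \<Longrightarrow> y \<in> \<Omega> \<Longrightarrow>
      (\<integral>\<^sup>+z. riesz_kernel (real DIM('a) - t) x z * riesz_kernel a z y \<partial>M) \<le> ennreal C"
    using riesz_composition_bounded[of "real DIM('a) - t" a] t a real_DIM_ge_2 s_le_1 by auto
  define c where "c = c1 * R powr (2 * s - t) / \<bar>m\<bar>"
  have c: "0 \<le> c"
    using c1_pos by (simp add: c_def)
  have "AE x in M. ennreal \<bar>\<Phi> x\<bar> \<le> A * ennreal (c * C) * (\<integral>\<^sup>+y. ennreal \<bar>\<Phi> y\<bar> \<partial>M)"
    if [measurable]: "\<Phi> \<in> borel_measurable M" and eig: "aeq \<Omega> (Ginv \<Omega> G \<Phi>) (\<lambda>x. m * \<Phi> x)"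
      and bound: "AE z in M. ennreal \<bar>\<Phi> z\<bar> \<le> A * riesz_potential a \<Phi> z" for \<Phi> A
    using eigenfunction_le_iterated_potential[OF t m that, folded c_def] AE_space
  proof (elim AE_mp, intro AE_I2 impI)
    fix x
    assume H: "ennreal \<bar>\<Phi> x\<bar> \<le> ennreal c * A *
        (\<integral>\<^sup>+y. (\<integral>\<^sup>+z. riesz_kernel (real DIM('a) - t) x z * riesz_kernel a z y \<partial>M) * ennreal \<bar>\<Phi> y\<bar> \<partial>M)"
      and x: "x \<in> space M"
    have "(\<integral>\<^sup>+y. (\<integral>\<^sup>+z. riesz_kernel (real DIM('a) - t) x z * riesz_kernel a z y \<partial>M) * ennreal \<bar>\<Phi> y\<bar> \<partial>M)
          \<le> (\<integral>\<^sup>+y. ennreal C * ennreal \<bar>\<Phi> y\<bar> \<partial>M)"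
      using x by (intro nn_integral_mono mult_right_mono C(2)) auto
    also have "\<dots> = ennreal C * (\<integral>\<^sup>+y. ennreal \<bar>\<Phi> y\<bar> \<partial>M)"
      by (rule nn_integral_cmult) measurable
    finally have "ennreal c * A * (\<integral>\<^sup>+y. (\<integral>\<^sup>+z. riesz_kernel (real DIM('a) - t) x z * riesz_kernel a z y \<partial>M)
                     * ennreal \<bar>\<Phi> y\<bar> \<partial>M) \<le> ennreal c * A * (ennreal C * (\<integral>\<^sup>+y. ennreal \<bar>\<Phi> y\<bar> \<partial>M))"
      by (rule mult_left_mono) simp
    from order_trans[OF H this]
    show "ennreal \<bar>\<Phi> x\<bar> \<le> A * ennreal (c * C) * (\<integral>\<^sup>+y. ennreal \<bar>\<Phi> y\<bar> \<partial>M)"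
      using c C(1) by (simp add: ennreal_mult ac_simps)
  qed
  then show ?thesis
    using c C(1) by (intro exI[of _ "c * C"]) auto
qed

lemma eigenfunction_le_riesz_potential_iterate:
  assumes t: "0 < t" "t \<le> 2 * s" and m: "m \<noteq> 0" and j: "1 \<le> j" "real j * t < real DIM('a)"
  shows "\<exists>A\<ge>0. \<forall>\<Phi>. \<Phi> \<in> borel_measurable M \<longrightarrow> aeq \<Omega> (Ginv \<Omega> G \<Phi>) (\<lambda>x. m * \<Phi> x) \<longrightarrow>
           (AE x in M. ennreal \<bar>\<Phi> x\<bar> \<le> ennreal A * riesz_potential (real DIM('a) - real j * t) \<Phi> x)"
  using j
proof (induction j)
  case (Suc j)
  show ?case
  proof (cases "j = 0")
    case True
    have "AE x in M. ennreal \<bar>\<Phi> x\<bar> \<le> ennreal (c1 * R powr (2 * s - t) / \<bar>m\<bar>) *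
            riesz_potential (real DIM('a) - t) \<Phi> x"
      if [measurable]: "\<Phi> \<in> borel_measurable M" "aeq \<Omega> (Ginv \<Omega> G \<Phi>) (\<lambda>x. m * \<Phi> x)" for \<Phi>
      unfolding riesz_potential_def using that(2)
      by (rule eigenfunction_le_riesz_potential[OF t m]) auto
    then show ?thesis
      using True c1_pos by (intro exI[of _ "c1 * R powr (2 * s - t) / \<bar>m\<bar>"]) auto
  next
    case False
    have "real j * t < real DIM('a)"
      using Suc.prems t by (simp add: algebra_simps)
    with False Suc.IH obtain A where A: "A \<ge> 0" "\<And>\<Phi>. \<Phi> \<in> borel_measurable M \<Longrightarrow> aeq \<Omega> (Ginv \<Omega> G \<Phi>) (\<lambda>x. m * \<Phi> x) \<Longrightarrow>
        AE x in M. ennreal \<bar>\<Phi> x\<bar> \<le> ennreal A * riesz_potential (real DIM('a) - real j * t) \<Phi> x"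
      by auto
    have "t < real DIM('a) - real j * t" "real DIM('a) - real j * t < real DIM('a)"
      using Suc.prems False t by (auto simp: algebra_simps)
    from eigenfunction_le_riesz_potential_step[OF t this m] obtain K where K: "K \<ge> 0"
      "\<forall>\<Phi> A. \<Phi> \<in> borel_measurable M \<longrightarrow> aeq \<Omega> (Ginv \<Omega> G \<Phi>) (\<lambda>x. m * \<Phi> x) \<longrightarrow>
         (AE z in M. ennreal \<bar>\<Phi> z\<bar> \<le> A * riesz_potential (real DIM('a) - real j * t) \<Phi> z) \<longrightarrow>
         (AE x in M. ennreal \<bar>\<Phi> x\<bar> \<le> A * ennreal K * riesz_potential (real DIM('a) - real j * t - t) \<Phi> x)"
      by blast
    have exponent: "real DIM('a) - real j * t - t = real DIM('a) - real (Suc j) * t"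
      by (simp add: algebra_simps)
    have "AE x in M. ennreal \<bar>\<Phi> x\<bar> \<le> ennreal (A * K) * riesz_potential (real DIM('a) - real (Suc j) * t) \<Phi> x"
      if "\<Phi> \<in> borel_measurable M" "aeq \<Omega> (Ginv \<Omega> G \<Phi>) (\<lambda>x. m * \<Phi> x)" for \<Phi>
      using K(2)[rule_format, OF that A(2)[OF that]] A(1) K(1) by (simp only: exponent ennreal_mult)
    then show ?thesis
      using A(1) K(1) by (intro exI[of _ "A * K"]) auto
  qed
qed simp

lemma nn_integral_abs_le_L2:
  assumes "L2fun \<Omega> \<phi>"
  shows "(\<integral>\<^sup>+y. ennreal \<bar>\<phi> y\<bar> \<partial>M) \<le> ennreal ((measure M \<Omega> + (\<integral>y. (\<phi> y)\<^sup>2 \<partial>M)) / 2)"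
proof -
  have [measurable]: "\<phi> \<in> borel_measurable M" and square: "integrable M (\<lambda>y. (\<phi> y)\<^sup>2)"
    using assms by (auto simp: L2fun_def)
  have "(\<integral>\<^sup>+y. ennreal \<bar>\<phi> y\<bar> \<partial>M) \<le> (\<integral>\<^sup>+y. ennreal ((1 + (\<phi> y)\<^sup>2) / 2) \<partial>M)"
  proof (intro nn_integral_mono ennreal_leI)
    fix y
    have "0 \<le> (\<bar>\<phi> y\<bar> - 1)\<^sup>2"
      by simp
    then show "\<bar>\<phi> y\<bar> \<le> (1 + (\<phi> y)\<^sup>2) / 2"
      by (simp add: power2_eq_square algebra_simps abs_mult_self_eq)
  qed
  also have "\<dots> = ennreal (\<integral>y. (1 + (\<phi> y)\<^sup>2) / 2 \<partial>M)"
    using square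
    by (intro nn_integral_eq_integral)
       (auto intro!: integrable_divide Bochner_Integration.integrable_add
                     finite_measure.integrable_const[OF finite_measure_M])
  also have "(\<integral>y. (1 + (\<phi> y)\<^sup>2) / 2 \<partial>M) = (measure M \<Omega> + (\<integral>y. (\<phi> y)\<^sup>2 \<partial>M)) / 2"
  proof -
    have "(\<integral>y. 1 + (\<phi> y)\<^sup>2 \<partial>M) = (\<integral>y. 1 \<partial>M) + (\<integral>y. (\<phi> y)\<^sup>2 \<partial>M)"
      using square finite_measure.integrable_const[OF finite_measure_M]
      by (intro Bochner_Integration.integral_add) auto
    then show ?thesis
      by simp
  qed
  finally show ?thesis .
qed

definition normalized_eigenfunction :: "real \<Rightarrow> ('a \<Rightarrow> real) \<Rightarrow> bool" where
  "normalized_eigenfunction m \<Phi> \<longleftrightarrow>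
     L2fun \<Omega> \<Phi> \<and> aeq \<Omega> (Ginv \<Omega> G \<Phi>) (\<lambda>x. m * \<Phi> x) \<and> (\<integral>x. (\<Phi> x)\<^sup>2 \<partial>M) = 1"

text \<open>With \<open>t = N / (k + 1/2)\<close>, the orders \<open>N - j t\<close> reach \<open>t/2 < t\<close> after \<open>k\<close> steps,
  and one more composition gives a bounded kernel.\<close>

lemma normalized_eigenfunction_bounded:
  assumes m: "m \<noteq> 0"
  shows "\<exists>B\<ge>0. \<forall>\<Phi>. normalized_eigenfunction m \<Phi> \<longrightarrow> (AE x in M. \<bar>\<Phi> x\<bar> \<le> B)"
proof -
  define n where "n = real DIM('a)"
  define k where "k = nat \<lceil>n / (2 * s)\<rceil>"
  define t where "t = n / (real k + 1 / 2)"
  have n: "2 \<le> n"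
    using real_DIM_ge_2 by (simp add: n_def)
  have k: "n / (2 * s) \<le> real k"
    unfolding k_def by linarith
  moreover have "0 < n / (2 * s)"
    using n s_pos by simp
  ultimately have "1 \<le> k"
    by linarith
  have t: "0 < t" "t \<le> 2 * s"
    using n k s_pos \<open>1 \<le> k\<close> by (auto simp: t_def field_simps)
  have kt: "real k * t < n" "n - real k * t = t / 2"
    using n by (auto simp: t_def field_simps)
  obtain A where A: "A \<ge> 0" "\<And>\<Phi>. \<Phi> \<in> borel_measurable M \<Longrightarrow> aeq \<Omega> (Ginv \<Omega> G \<Phi>) (\<lambda>x. m * \<Phi> x) \<Longrightarrow>
      AE x in M. ennreal \<bar>\<Phi> x\<bar> \<le> ennreal A * riesz_potential (t / 2) \<Phi> x"
    using eigenfunction_le_riesz_potential_iterate[OF t m \<open>1 \<le> k\<close>] kt unfolding n_def by auto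
  obtain K where K: "K \<ge> 0" "\<And>\<Phi> A. \<Phi> \<in> borel_measurable M \<Longrightarrow> aeq \<Omega> (Ginv \<Omega> G \<Phi>) (\<lambda>x. m * \<Phi> x) \<Longrightarrow>
      (AE z in M. ennreal \<bar>\<Phi> z\<bar> \<le> A * riesz_potential (t / 2) \<Phi> z) \<Longrightarrow>
      AE x in M. ennreal \<bar>\<Phi> x\<bar> \<le> A * ennreal K * (\<integral>\<^sup>+y. ennreal \<bar>\<Phi> y\<bar> \<partial>M)"
    using eigenfunction_le_L1_norm[OF t _ _ m, of "t / 2"] t by auto
  define W where "W = (measure M \<Omega> + 1) / 2"
  have "AE x in M. \<bar>\<Phi> x\<bar> \<le> A * K * W" if "normalized_eigenfunction m \<Phi>" for \<Phi>
  proof -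
    have \<Phi>: "\<Phi> \<in> borel_measurable M" "aeq \<Omega> (Ginv \<Omega> G \<Phi>) (\<lambda>x. m * \<Phi> x)"
      and L1: "(\<integral>\<^sup>+y. ennreal \<bar>\<Phi> y\<bar> \<partial>M) \<le> ennreal W"
      using that nn_integral_abs_le_L2[of \<Phi>] by (auto simp: normalized_eigenfunction_def L2fun_def W_def)
    from K(2)[OF \<Phi> A(2)[OF \<Phi>]] show ?thesis
    proof (elim AE_mp, intro AE_I2 impI)
      fix x
      assume "ennreal \<bar>\<Phi> x\<bar> \<le> ennreal A * ennreal K * (\<integral>\<^sup>+y. ennreal \<bar>\<Phi> y\<bar> \<partial>M)"
      also have "\<dots> \<le> ennreal A * ennreal K * ennreal W"
        by (rule mult_left_mono[OF L1]) simp
      finally show "\<bar>\<Phi> x\<bar> \<le> A * K * W"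
        using A(1) K(1) by (simp add: W_def ennreal_mult[symmetric] ennreal_le_iff)
    qed
  qed
  then show ?thesis
    using A(1) K(1) by (intro exI[of _ "A * K * W"]) (auto simp: W_def)
qed

lemma green_majorant_near_le:
  assumes x: "x \<in> \<Omega>" and near: "norm (x - z) < bdist x / 2" and \<beta>: "0 \<le> \<beta>"
  shows "green_majorant x z * bdist z powr \<beta>
         \<le> c1 * (2 * bdist x) powr \<beta> * norm (x - z) powr (-(real DIM('a) - 2 * s))"
proof -
  have "bdist z \<le> 2 * bdist x"
    using bdist_le_add_norm[of z x] near infdist_nonneg[of x "frontier \<Omega>"] by linarith
  then have "bdist z powr \<beta> \<le> (2 * bdist x) powr \<beta>"
    using \<beta> by (intro powr_mono2) (auto simp: infdist_nonneg)
  moreover have "green_majorant x z \<le> c1 * norm (x - z) powr (-(real DIM('a) - 2 * s))"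
    unfolding green_majorant_def using c1_pos by (intro mult_left_le) auto
  ultimately have "green_majorant x z * bdist z powr \<beta>
                   \<le> c1 * norm (x - z) powr (-(real DIM('a) - 2 * s)) * (2 * bdist x) powr \<beta>"
    using green_majorant_nonneg c1_pos by (intro mult_mono) auto
  then show ?thesis
    by (simp add: ac_simps)
qed

lemma green_majorant_far_le:
  assumes x: "x \<in> \<Omega>" and z: "z \<in> \<Omega>" and far: "bdist x / 2 \<le> norm (x - z)"
    and \<beta>: "0 \<le> \<beta>" "\<beta> \<le> \<beta>'" "\<beta>' \<le> \<gamma>" "\<beta>' \<le> \<beta> + s"
  shows "green_majorant x z * bdist z powr \<beta>
         \<le> c1 * 3 powr \<beta> * R powr (s - \<beta>' + \<beta>) * bdist x powr \<beta>' * norm (x - z) powr (-(real DIM('a) - s))"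
proof -
  define r where "r = norm (x - z)"
  define d where "d = bdist x"
  have d: "0 < d" "d \<le> 2 * r"
    using bdist_pos[OF x] far by (auto simp: d_def r_def)
  have r: "0 < r" "r < R"
    using d norm_diff_less_R[OF x z] by (auto simp: r_def)
  have "bdist z \<le> 3 * r"
    using bdist_le_add_norm[of z x] d unfolding r_def[symmetric] d_def[symmetric] by linarith
  then have "bdist z powr \<beta> \<le> 3 powr \<beta> * r powr \<beta>"
    using \<beta> r by (simp add: powr_mono2 infdist_nonneg powr_mult[symmetric])
  moreover have "min (d powr \<gamma> / r powr \<gamma>) 1 \<le> d powr \<beta>' * r powr (-\<beta>')"
    using d r \<beta> by (intro min_ratio_powr_le) auto
  ultimately have "green_majorant x z * bdist z powr \<beta>
      \<le> (c1 * r powr (-(real DIM('a) - 2 * s)) * (d powr \<beta>' * r powr (-\<beta>'))) * (3 powr \<beta> * r powr \<beta>)"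
    unfolding green_majorant_def r_def[symmetric] d_def[symmetric] using c1_pos
    by (intro mult_mono mult_left_mono) auto
  also have "\<dots> = c1 * 3 powr \<beta> * d powr \<beta>' * (r powr (s - \<beta>' + \<beta>) * r powr (-(real DIM('a) - s)))"
    by (simp add: powr_add[symmetric] algebra_simps)
  also have "\<dots> \<le> c1 * 3 powr \<beta> * d powr \<beta>' * (R powr (s - \<beta>' + \<beta>) * r powr (-(real DIM('a) - s)))"
    using c1_pos r \<beta> by (intro mult_left_mono mult_right_mono powr_mono2) auto
  finally show ?thesis
    by (simp add: r_def d_def algebra_simps)
qed

lemma green_majorant_bdist_le:
  assumes x: "x \<in> \<Omega>" and z: "z \<in> \<Omega>" and \<beta>: "0 \<le> \<beta>" "\<beta> \<le> \<beta>'" "\<beta>' \<le> \<gamma>" "\<beta>' \<le> \<beta> + s"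
  defines "d \<equiv> bdist x"
  shows "ennreal (green_majorant x z) * ennreal (bdist z powr \<beta>)
         \<le> ennreal (c1 * 2 powr \<beta> * d powr \<beta>)
             * (indicator (ball x (d / 2)) z * riesz_kernel (real DIM('a) - 2 * s) z x)
           + ennreal (c1 * 3 powr \<beta> * R powr (s - \<beta>' + \<beta>) * d powr \<beta>')
             * (indicator (ball x R) z * riesz_kernel (real DIM('a) - s) z x)"
    (is "_ \<le> ?near + ?far")
proof (cases "norm (x - z) < d / 2")
  case True
  then have "green_majorant x z * bdist z powr \<beta>
             \<le> c1 * 2 powr \<beta> * d powr \<beta> * norm (z - x) powr (-(real DIM('a) - 2 * s))"
    using green_majorant_near_le[OF x _ \<beta>(1), of z] bdist_pos[OF x]
    by (simp add: d_def norm_minus_commute powr_mult mult.assoc)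
  then have "ennreal (green_majorant x z) * ennreal (bdist z powr \<beta>) \<le> ?near"
    using True c1_pos green_majorant_nonneg
    by (simp add: riesz_kernel_def ennreal_mult[symmetric] dist_norm ennreal_leI)
  then show ?thesis
    by (rule order_trans) simp
next
  case False
  then have "green_majorant x z * bdist z powr \<beta>
             \<le> c1 * 3 powr \<beta> * R powr (s - \<beta>' + \<beta>) * d powr \<beta>' * norm (z - x) powr (-(real DIM('a) - s))"
    using green_majorant_far_le[OF x z _ \<beta>] by (simp add: d_def norm_minus_commute)
  moreover have "z \<in> ball x R"
    using norm_diff_less_R[OF x z] by (simp add: dist_norm)
  ultimately have "ennreal (green_majorant x z) * ennreal (bdist z powr \<beta>) \<le> ?far"
    using c1_pos green_majorant_nonneg by (simp add: riesz_kernel_def ennreal_mult[symmetric] ennreal_leI)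
  then show ?thesis
    by (rule order_trans) simp
qed

lemma nn_integral_majorant_bdist_le:
  assumes \<beta>: "0 \<le> \<beta>" "\<beta> \<le> \<gamma>"
  shows "\<exists>C\<ge>0. \<forall>x\<in>\<Omega>. (\<integral>\<^sup>+z. ennreal (green_majorant x z) * ennreal (bdist z powr \<beta>) \<partial>M)
                        \<le> ennreal (C * bdist x powr (min \<gamma> (\<beta> + s)))"
proof -
  define \<beta>' where "\<beta>' = min \<gamma> (\<beta> + s)"
  have \<beta>': "\<beta> \<le> \<beta>'" "\<beta>' \<le> \<gamma>" "\<beta>' \<le> \<beta> + s"
    using \<beta> s_pos by (auto simp: \<beta>'_def)
  define n where "n = real DIM('a)"
  have n: "2 \<le> n"
    unfolding n_def by (rule real_DIM_ge_2)
  obtain Ci where Ci: "Ci \<ge> 0" "\<And>y::'a. \<And>\<rho>. 0 < \<rho> \<Longrightarrow>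
      (\<integral>\<^sup>+z. indicator (ball y \<rho>) z * riesz_kernel (n - 2 * s) z y \<partial>lborel) \<le> ennreal (Ci * \<rho> powr (2 * s))"
    using nn_integral_riesz_ball_le[of "n - 2 * s", where 'a='a] n s_le_1 s_pos unfolding n_def by auto
  obtain Co where Co: "Co \<ge> 0" "\<And>y::'a. \<And>\<rho>. 0 < \<rho> \<Longrightarrow>
      (\<integral>\<^sup>+z. indicator (ball y \<rho>) z * riesz_kernel (n - s) z y \<partial>lborel) \<le> ennreal (Co * \<rho> powr s)"
    using nn_integral_riesz_ball_le[of "n - s", where 'a='a] n s_le_1 s_pos unfolding n_def by auto
  define a1 where "a1 = c1 * 2 powr \<beta>"
  define a2 where "a2 = c1 * 3 powr \<beta> * R powr (s - \<beta>' + \<beta>)"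
  define C where "C = a1 * Ci * R powr (\<beta> + 2 * s - \<beta>') + a2 * Co * R powr s"
  have a: "0 \<le> a1" "0 \<le> a2"
    using c1_pos by (auto simp: a1_def a2_def)
  have "(\<integral>\<^sup>+z. ennreal (green_majorant x z) * ennreal (bdist z powr \<beta>) \<partial>M) \<le> ennreal (C * bdist x powr \<beta>')"
    if x: "x \<in> \<Omega>" for x
  proof -
    define d where "d = bdist x"
    have d: "0 < d" "d \<le> R"
      using bdist_pos[OF x] bdist_le_R[OF x] by (auto simp: d_def)
    define f1 where "f1 z = indicator (ball x (d / 2)) z * riesz_kernel (n - 2 * s) z x" for z
    define f2 where "f2 z = indicator (ball x R) z * riesz_kernel (n - s) z x" for z
    have [measurable]: "f1 \<in> borel_measurable lborel" "f2 \<in> borel_measurable lborel"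
      unfolding f1_def f2_def riesz_kernel_def
      by (intro borel_measurable_times_ennreal borel_measurable_indicator; simp add: borel_open)+
    have "(\<integral>\<^sup>+z. ennreal (green_majorant x z) * ennreal (bdist z powr \<beta>) \<partial>M)
          \<le> (\<integral>\<^sup>+z. ennreal (a1 * d powr \<beta>) * f1 z + ennreal (a2 * d powr \<beta>') * f2 z \<partial>M)"
      using green_majorant_bdist_le[OF x _ \<beta>(1) \<beta>']
      unfolding a1_def a2_def f1_def f2_def d_def n_def by (intro nn_integral_mono) simp
    also have "\<dots> \<le> (\<integral>\<^sup>+z. ennreal (a1 * d powr \<beta>) * f1 z + ennreal (a2 * d powr \<beta>') * f2 z \<partial>lborel)"
      by (rule nn_integral_M_le_lborel)
    also have "\<dots> = ennreal (a1 * d powr \<beta>) * integral\<^sup>N lborel f1 + ennreal (a2 * d powr \<beta>') * integral\<^sup>N lborel f2"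
      by (simp add: nn_integral_add nn_integral_cmult)
    also have "\<dots> \<le> ennreal (a1 * d powr \<beta>) * ennreal (Ci * (d / 2) powr (2 * s))
                   + ennreal (a2 * d powr \<beta>') * ennreal (Co * R powr s)"
      unfolding f1_def f2_def using d by (intro add_mono mult_left_mono Ci(2) Co(2) R_pos) auto
    also have "\<dots> = ennreal (a1 * Ci * (d powr \<beta> * (d / 2) powr (2 * s)) + a2 * Co * R powr s * d powr \<beta>')"
      using a Ci(1) Co(1) by (simp add: ennreal_mult[symmetric] ennreal_plus[symmetric] ac_simps del: ennreal_plus)
    also have "\<dots> \<le> ennreal (C * d powr \<beta>')"
    proof (rule ennreal_leI)
      have "d powr \<beta> * (d / 2) powr (2 * s) \<le> d powr \<beta> * d powr (2 * s)"
        using d s_pos by (intro mult_left_mono powr_mono2) auto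
      also have "\<dots> \<le> R powr (\<beta> + 2 * s - \<beta>') * d powr \<beta>'"
        using d \<beta>' s_pos by (simp add: powr_add[symmetric] powr_le_scaled_powr)
      finally show "a1 * Ci * (d powr \<beta> * (d / 2) powr (2 * s)) + a2 * Co * R powr s * d powr \<beta>' \<le> C * d powr \<beta>'"
        using a Ci(1) by (simp add: C_def distrib_right mult_left_mono mult.assoc)
    qed
    finally show ?thesis
      by (simp add: d_def)
  qed
  moreover have "0 \<le> C"
    using a Ci Co by (simp add: C_def)
  ultimately show ?thesis
    unfolding \<beta>'_def by blast
qed

lemma eigenfunction_boundary_decay_step:
  assumes \<beta>: "0 \<le> \<beta>" "\<beta> \<le> \<gamma>" and m: "m \<noteq> 0"
  shows "\<exists>K\<ge>0. \<forall>\<Phi> B. 0 \<le> B \<longrightarrow> aeq \<Omega> (Ginv \<Omega> G \<Phi>) (\<lambda>x. m * \<Phi> x) \<longrightarrow>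
           (AE z in M. \<bar>\<Phi> z\<bar> \<le> B * bdist z powr \<beta>) \<longrightarrow>
           (AE x in M. \<bar>\<Phi> x\<bar> \<le> B * K * bdist x powr (min \<gamma> (\<beta> + s)))"
proof -
  obtain C where C: "C \<ge> 0" "\<And>x. x \<in> \<Omega> \<Longrightarrow>
      (\<integral>\<^sup>+z. ennreal (green_majorant x z) * ennreal (bdist z powr \<beta>) \<partial>M)
      \<le> ennreal (C * bdist x powr (min \<gamma> (\<beta> + s)))"
    using nn_integral_majorant_bdist_le[OF \<beta>] by blast
  have "AE x in M. \<bar>\<Phi> x\<bar> \<le> B * (C / \<bar>m\<bar>) * bdist x powr (min \<gamma> (\<beta> + s))"
    if B: "0 \<le> B" and eig: "aeq \<Omega> (Ginv \<Omega> G \<Phi>) (\<lambda>x. m * \<Phi> x)"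
      and bound: "AE z in M. \<bar>\<Phi> z\<bar> \<le> B * bdist z powr \<beta>" for \<Phi> B
  proof -
    have "AE z in M. ennreal \<bar>\<Phi> z\<bar> \<le> ennreal (B * bdist z powr \<beta>)"
      using bound by (elim AE_mp) (auto intro!: AE_I2 ennreal_leI)
    from eigenfunction_le_majorant_potential[OF eig this] AE_space show ?thesis
    proof (elim AE_mp, intro AE_I2 impI)
      fix x
      assume x: "x \<in> space M"
      assume "ennreal (\<bar>m\<bar> * \<bar>\<Phi> x\<bar>) \<le> (\<integral>\<^sup>+z. ennreal (green_majorant x z) * ennreal (B * bdist z powr \<beta>) \<partial>M)"
      also have "\<dots> = ennreal B * (\<integral>\<^sup>+z. ennreal (green_majorant x z) * ennreal (bdist z powr \<beta>) \<partial>M)"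
        using B by (subst nn_integral_cmult[symmetric]) (auto simp: ennreal_mult ac_simps)
      also have "\<dots> \<le> ennreal B * ennreal (C * bdist x powr (min \<gamma> (\<beta> + s)))"
        using x by (intro mult_left_mono C(2)) auto
      finally have "\<bar>m\<bar> * \<bar>\<Phi> x\<bar> \<le> B * (C * bdist x powr (min \<gamma> (\<beta> + s)))"
        using B C(1) by (simp add: ennreal_mult[symmetric] ennreal_le_iff)
      then show "\<bar>\<Phi> x\<bar> \<le> B * (C / \<bar>m\<bar>) * bdist x powr (min \<gamma> (\<beta> + s))"
        using m by (simp add: field_simps)
    qed
  qed
  then show ?thesis
    using C(1) by (intro exI[of _ "C / \<bar>m\<bar>"]) auto
qed

lemma normalized_eigenfunction_boundary_decay:
  assumes m: "m \<noteq> 0"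
  shows "\<exists>\<kappa>>0. \<forall>\<Phi>. normalized_eigenfunction m \<Phi> \<longrightarrow> (AE x in M. \<bar>\<Phi> x\<bar> \<le> \<kappa> * bdist x powr \<gamma>)"
proof -
  have decay: "\<exists>B\<ge>0. \<forall>\<Phi>. normalized_eigenfunction m \<Phi> \<longrightarrow>
                 (AE x in M. \<bar>\<Phi> x\<bar> \<le> B * bdist x powr (min \<gamma> (real j * s)))" for j
  proof (induction j)
    case 0
    obtain B where B: "B \<ge> 0" "\<forall>\<Phi>. normalized_eigenfunction m \<Phi> \<longrightarrow> (AE x in M. \<bar>\<Phi> x\<bar> \<le> B)"
      using normalized_eigenfunction_bounded[OF m] by blast
    have "AE x in M. \<bar>\<Phi> x\<bar> \<le> B * bdist x powr min \<gamma> (real 0 * s)" if "normalized_eigenfunction m \<Phi>" for \<Phi>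
      using B(2)[rule_format, OF that] AE_space
    proof (elim AE_mp, intro AE_I2 impI)
      fix x
      assume "\<bar>\<Phi> x\<bar> \<le> B" "x \<in> space M"
      then show "\<bar>\<Phi> x\<bar> \<le> B * bdist x powr min \<gamma> (real 0 * s)"
        using bdist_pos[of x] \<gamma>_pos by simp
    qed
    then show ?case
      using B(1) by blast
  next
    case (Suc j)
    then obtain B where B: "B \<ge> 0" "\<forall>\<Phi>. normalized_eigenfunction m \<Phi> \<longrightarrow>
        (AE x in M. \<bar>\<Phi> x\<bar> \<le> B * bdist x powr (min \<gamma> (real j * s)))"
      by blast
    have \<beta>: "0 \<le> min \<gamma> (real j * s)" "min \<gamma> (real j * s) \<le> \<gamma>"
      using \<gamma>_pos s_pos by auto
    have exponent: "min \<gamma> (min \<gamma> (real j * s) + s) = min \<gamma> (real (Suc j) * s)"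
      using s_pos by (auto simp: min_def algebra_simps)
    obtain K where "K \<ge> 0" "\<forall>\<Phi> B. 0 \<le> B \<longrightarrow> aeq \<Omega> (Ginv \<Omega> G \<Phi>) (\<lambda>x. m * \<Phi> x) \<longrightarrow>
        (AE z in M. \<bar>\<Phi> z\<bar> \<le> B * bdist z powr min \<gamma> (real j * s)) \<longrightarrow>
        (AE x in M. \<bar>\<Phi> x\<bar> \<le> B * K * bdist x powr min \<gamma> (real (Suc j) * s))"
      using eigenfunction_boundary_decay_step[OF \<beta> m] unfolding exponent by blast
    with B show ?case
      by (intro exI[of _ "B * K"]) (auto simp: normalized_eigenfunction_def)
  qed
  define j where "j = nat \<lceil>\<gamma> / s\<rceil>"
  have "\<gamma> / s \<le> real j"
    unfolding j_def by linarith
  then have "\<gamma> \<le> real j * s"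
    using s_pos by (simp add: field_simps)
  then have "min \<gamma> (real j * s) = \<gamma>"
    by simp
  then obtain B where B: "B \<ge> 0" "\<forall>\<Phi>. normalized_eigenfunction m \<Phi> \<longrightarrow> (AE x in M. \<bar>\<Phi> x\<bar> \<le> B * bdist x powr \<gamma>)"
    using decay[of j] by metis
  have "AE x in M. \<bar>\<Phi> x\<bar> \<le> (B + 1) * bdist x powr \<gamma>" if "normalized_eigenfunction m \<Phi>" for \<Phi>
    using B(2)[rule_format, OF that]
  proof (elim AE_mp, intro AE_I2 impI)
    fix x
    have "B * bdist x powr \<gamma> \<le> (B + 1) * bdist x powr \<gamma>"
      by (intro mult_right_mono) auto
    then show "\<bar>\<Phi> x\<bar> \<le> B * bdist x powr \<gamma> \<Longrightarrow> \<bar>\<Phi> x\<bar> \<le> (B + 1) * bdist x powr \<gamma>"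
      by linarith
  qed
  then show ?thesis
    using B(1) by (intro exI[of _ "B + 1"]) auto
qed

lemma nn_integral_riesz_potential_finite:
  assumes c: "0 \<le> c" "c < real DIM('a)" and "L2fun \<Omega> \<phi>"
  shows "(\<integral>\<^sup>+x. riesz_potential c \<phi> x \<partial>M) < \<infinity>"
proof -
  have [measurable]: "\<phi> \<in> borel_measurable M"
    using assms by (simp add: L2fun_def)
  obtain C where C: "C \<ge> 0" "\<And>y. y \<in> \<Omega> \<Longrightarrow> (\<integral>\<^sup>+x. riesz_kernel c y x \<partial>M) \<le> ennreal C"
    using riesz_kernel_integral_bounded[OF c] by blast
  have "(\<integral>\<^sup>+x. riesz_potential c \<phi> x \<partial>M) = (\<integral>\<^sup>+y. (\<integral>\<^sup>+x. riesz_kernel c x y * ennreal \<bar>\<phi> y\<bar> \<partial>M) \<partial>M)"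
    unfolding riesz_potential_def by (rule MM.Fubini'[symmetric]) measurable
  also have "\<dots> = (\<integral>\<^sup>+y. (\<integral>\<^sup>+x. riesz_kernel c y x \<partial>M) * ennreal \<bar>\<phi> y\<bar> \<partial>M)"
  proof (intro nn_integral_cong)
    fix y
    have "(\<integral>\<^sup>+x. riesz_kernel c x y * ennreal \<bar>\<phi> y\<bar> \<partial>M) = (\<integral>\<^sup>+x. riesz_kernel c y x * ennreal \<bar>\<phi> y\<bar> \<partial>M)"
      by (simp add: riesz_kernel_sym[of c _ y])
    then show "(\<integral>\<^sup>+x. riesz_kernel c x y * ennreal \<bar>\<phi> y\<bar> \<partial>M) = (\<integral>\<^sup>+x. riesz_kernel c y x \<partial>M) * ennreal \<bar>\<phi> y\<bar>"
      by (simp add: nn_integral_multc)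
  qed
  also have "\<dots> \<le> (\<integral>\<^sup>+y. ennreal C * ennreal \<bar>\<phi> y\<bar> \<partial>M)"
    by (intro nn_integral_mono mult_right_mono C(2)) auto
  also have "\<dots> = ennreal C * (\<integral>\<^sup>+y. ennreal \<bar>\<phi> y\<bar> \<partial>M)"
    by (rule nn_integral_cmult) measurable
  also have "\<dots> < \<infinity>"
    using le_less_trans[OF nn_integral_abs_le_L2[OF assms(3)]] by (simp add: ennreal_mult_less_top)
  finally show ?thesis .
qed

lemma AE_nn_integral_green_le_riesz_potential:
  assumes [measurable]: "f \<in> borel_measurable M"
  shows "AE x in M. (\<integral>\<^sup>+y. ennreal (norm (G x y * f y)) \<partial>M)
                    \<le> ennreal (c1 * R powr s) * riesz_potential (real DIM('a) - s) f x"
  using AE_green_le_majorant AE_space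
proof (elim AE_mp, intro AE_I2 impI)
  fix x
  assume x: "x \<in> space M" and G: "AE y in M. 0 \<le> G x y \<and> G x y \<le> green_majorant x y"
  have "(\<integral>\<^sup>+y. ennreal (norm (G x y * f y)) \<partial>M)
        \<le> (\<integral>\<^sup>+y. ennreal (c1 * R powr s) * (riesz_kernel (real DIM('a) - s) x y * ennreal \<bar>f y\<bar>) \<partial>M)"
    using G AE_space
  proof (intro nn_integral_mono_AE, elim AE_mp, intro AE_I2 impI)
    fix y
    assume y: "y \<in> space M" and "0 \<le> G x y \<and> G x y \<le> green_majorant x y"
    then have "ennreal (norm (G x y * f y)) \<le> ennreal (green_majorant x y) * ennreal \<bar>f y\<bar>"
      using green_majorant_nonneg by (simp add: abs_mult mult_right_mono ennreal_mult[symmetric] ennreal_leI)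
    also have "\<dots> \<le> (ennreal (c1 * R powr s) * riesz_kernel (real DIM('a) - s) x y) * ennreal \<bar>f y\<bar>"
      using green_majorant_le_riesz_kernel[of s x y] x y s_pos by (intro mult_right_mono) auto
    finally show "ennreal (norm (G x y * f y))
                  \<le> ennreal (c1 * R powr s) * (riesz_kernel (real DIM('a) - s) x y * ennreal \<bar>f y\<bar>)"
      by (simp add: mult.assoc)
  qed
  also have "\<dots> = ennreal (c1 * R powr s) * riesz_potential (real DIM('a) - s) f x"
    unfolding riesz_potential_def by (rule nn_integral_cmult) measurable
  finally show "(\<integral>\<^sup>+y. ennreal (norm (G x y * f y)) \<partial>M)
                \<le> ennreal (c1 * R powr s) * riesz_potential (real DIM('a) - s) f x" .
qed

lemma AE_integrable_green_section:
  assumes "L2fun \<Omega> \<phi>"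
  shows "AE x in M. integrable M (\<lambda>y. G x y * \<phi> y)"
proof -
  have [measurable]: "\<phi> \<in> borel_measurable M" "(\<lambda>z. G (fst z) (snd z)) \<in> borel_measurable (M \<Otimes>\<^sub>M M)"
    using assms green_measurable by (simp_all add: L2fun_def)
  define F where "F x = (\<integral>\<^sup>+y. ennreal (norm (G x y * \<phi> y)) \<partial>M)" for x
  have F_measurable: "F \<in> borel_measurable M"
    unfolding F_def
  proof (rule sigma_finite_measure.borel_measurable_nn_integral)
    show "sigma_finite_measure M"
      using finite_measure_M by (simp add: finite_measure_def)
    have "(\<lambda>z. ennreal (norm (G (fst z) (snd z) * \<phi> (snd z)))) \<in> borel_measurable (M \<Otimes>\<^sub>M M)"
      by measurable
    then show "case_prod (\<lambda>x y. ennreal (norm (G x y * \<phi> y))) \<in> borel_measurable (M \<Otimes>\<^sub>M M)"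
      by (simp add: case_prod_beta')
  qed
  have "(\<integral>\<^sup>+x. F x \<partial>M) \<le> (\<integral>\<^sup>+x. ennreal (c1 * R powr s) * riesz_potential (real DIM('a) - s) \<phi> x \<partial>M)"
    unfolding F_def by (intro nn_integral_mono_AE AE_nn_integral_green_le_riesz_potential) measurable
  also have "\<dots> = ennreal (c1 * R powr s) * (\<integral>\<^sup>+x. riesz_potential (real DIM('a) - s) \<phi> x \<partial>M)"
    by (rule nn_integral_cmult) measurable
  also have "\<dots> < \<infinity>"
    using nn_integral_riesz_potential_finite[OF _ _ assms] s_pos s_le_1 real_DIM_ge_2
    by (simp add: ennreal_mult_less_top)
  finally have "(\<integral>\<^sup>+x. F x \<partial>M) \<noteq> \<infinity>"
    by simp
  from nn_integral_PInf_AE[OF F_measurable this] AE_space show ?thesis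
  proof (elim AE_mp, intro AE_I2 impI)
    fix x
    assume "F x \<noteq> \<infinity>" "x \<in> space M"
    moreover have "(\<lambda>y. G x y) \<in> borel_measurable M"
      using measurable_Pair2[OF green_measurable, of x] \<open>x \<in> space M\<close> by simp
    ultimately show "integrable M (\<lambda>y. G x y * \<phi> y)"
      unfolding F_def by (intro integrableI_bounded) (auto simp: top.not_eq_extremum)
  qed
qed

end

locale K2_self_adjoint_green_function = K2_green_function +
  assumes self_adjoint: "\<forall>f g. L2fun \<Omega> f \<longrightarrow> L2fun \<Omega> g \<longrightarrow> L2fun \<Omega> (Ginv \<Omega> G f) \<and>
    (\<integral>x. Ginv \<Omega> G f x * g x \<partial>lebesgue_on \<Omega>) = (\<integral>x. f x * Ginv \<Omega> G g x \<partial>lebesgue_on \<Omega>)"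
begin

lemma eigenfunctions_orthogonal:
  assumes f: "L2fun \<Omega> f" and g: "L2fun \<Omega> g"
    and ef: "aeq \<Omega> (Ginv \<Omega> G f) (\<lambda>x. a * f x)" and eg: "aeq \<Omega> (Ginv \<Omega> G g) (\<lambda>x. b * g x)"
    and "a \<noteq> b"
  shows "(\<integral>x. f x * g x \<partial>M) = 0"
proof -
  have [measurable]: "f \<in> borel_measurable M" "g \<in> borel_measurable M"
    "Ginv \<Omega> G f \<in> borel_measurable M" "Ginv \<Omega> G g \<in> borel_measurable M"
    using f g self_adjoint by (auto simp: L2fun_def)
  have "a * (\<integral>x. f x * g x \<partial>M) = (\<integral>x. Ginv \<Omega> G f x * g x \<partial>M)"
    using ef unfolding aeq_def by (subst integral_mult_right_zero[symmetric], intro integral_cong_AE) (auto elim!: AE_mp)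
  also have "\<dots> = (\<integral>x. f x * Ginv \<Omega> G g x \<partial>M)"
    using self_adjoint f g by blast
  also have "\<dots> = b * (\<integral>x. f x * g x \<partial>M)"
    using eg unfolding aeq_def by (subst integral_mult_right_zero[symmetric], intro integral_cong_AE) (auto elim!: AE_mp)
  finally show ?thesis
    using \<open>a \<noteq> b\<close> by simp
qed

lemma eigenfunction_sum:
  assumes "finite A" and L2: "\<And>j. j \<in> A \<Longrightarrow> L2fun \<Omega> (\<Phi> j)"
    and eig: "\<And>j. j \<in> A \<Longrightarrow> aeq \<Omega> (Ginv \<Omega> G (\<Phi> j)) (\<lambda>x. m * \<Phi> j x)"
  shows "aeq \<Omega> (Ginv \<Omega> G (\<lambda>x. \<Sum>j\<in>A. c j * \<Phi> j x)) (\<lambda>x. m * (\<Sum>j\<in>A. c j * \<Phi> j x))"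
proof -
  have "AE x in M. \<forall>j\<in>A. integrable M (\<lambda>y. G x y * \<Phi> j y)"
    using \<open>finite A\<close> by (intro AE_finite_allI AE_integrable_green_section L2)
  moreover have "AE x in M. \<forall>j\<in>A. Ginv \<Omega> G (\<Phi> j) x = m * \<Phi> j x"
    using \<open>finite A\<close> eig by (intro AE_finite_allI) (auto simp: aeq_def)
  ultimately show ?thesis
    unfolding aeq_def
  proof (elim AE_mp, intro AE_I2 impI)
    fix x
    assume integrable: "\<forall>j\<in>A. integrable M (\<lambda>y. G x y * \<Phi> j y)"
      and eigen: "\<forall>j\<in>A. Ginv \<Omega> G (\<Phi> j) x = m * \<Phi> j x"
    have "Ginv \<Omega> G (\<lambda>x. \<Sum>j\<in>A. c j * \<Phi> j x) x = (\<integral>y. (\<Sum>j\<in>A. c j * (G x y * \<Phi> j y)) \<partial>M)"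
      unfolding Ginv_def by (simp add: sum_distrib_left ac_simps)
    also have "\<dots> = (\<Sum>j\<in>A. c j * Ginv \<Omega> G (\<Phi> j) x)"
      using integrable by (simp add: Bochner_Integration.integral_sum Ginv_def)
    also have "\<dots> = m * (\<Sum>j\<in>A. c j * \<Phi> j x)"
      using eigen by (simp add: sum_distrib_left ac_simps)
    finally show "Ginv \<Omega> G (\<lambda>x. \<Sum>j\<in>A. c j * \<Phi> j x) x = m * (\<Sum>j\<in>A. c j * \<Phi> j x)" .
  qed
qed

text \<open>Otherwise some nonzero combination of the orthonormal \<open>\<Phi> j\<close> with \<open>\<mu> j = m\<close> would be
  orthogonal to all \<open>\<Psi> k\<close>: to those with \<open>k < n\<close> and \<open>\<nu> k = m\<close> by choice of the combination,
  and to all others because their eigenvalue differs from \<open>m\<close> (as \<open>\<nu> k \<le> \<nu> n < \<mu> n \<le> m\<close> for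
  \<open>k \<ge> n\<close>). This contradicts completeness of \<open>\<Psi>\<close>.\<close>

lemma card_eigenvalue_le:
  assumes E1: "ordered_eigensystem \<Omega> G \<Phi> \<mu>" and E2: "ordered_eigensystem \<Omega> G \<Psi> \<nu>"
    and n: "1 \<le> n" and less: "\<nu> n < \<mu> n" and j0: "j0 \<in> {1..n}"
  shows "card {j\<in>{1..n}. \<mu> j = \<mu> j0} \<le> card {k\<in>{1..<n}. \<nu> k = \<mu> j0}"
proof -
  define m where "m = \<mu> j0"
  define A where "A = {j\<in>{1..n}. \<mu> j = m}"
  define B where "B = {k\<in>{1..<n}. \<nu> k = m}"
  have \<Phi>: "\<And>k. 1 \<le> k \<Longrightarrow> L2fun \<Omega> (\<Phi> k) \<and> \<mu> k \<noteq> 0 \<and> aeq \<Omega> (Ginv \<Omega> G (\<Phi> k)) (\<lambda>x. \<mu> k * \<Phi> k x)"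
    and \<Phi>_orthonormal: "\<And>j k. 1 \<le> j \<Longrightarrow> 1 \<le> k \<Longrightarrow> (\<integral>x. \<Phi> j x * \<Phi> k x \<partial>M) = (if j = k then 1 else 0)"
    and \<mu>_decreasing: "\<And>j k. 1 \<le> j \<Longrightarrow> j \<le> k \<Longrightarrow> \<mu> k \<le> \<mu> j"
    using E1 unfolding ordered_eigensystem_def by auto
  have \<Psi>: "\<And>k. 1 \<le> k \<Longrightarrow> L2fun \<Omega> (\<Psi> k) \<and> \<nu> k \<noteq> 0 \<and> aeq \<Omega> (Ginv \<Omega> G (\<Psi> k)) (\<lambda>x. \<nu> k * \<Psi> k x)"
    and \<nu>_decreasing: "\<And>j k. 1 \<le> j \<Longrightarrow> j \<le> k \<Longrightarrow> \<nu> k \<le> \<nu> j"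
    and \<Psi>_complete: "\<And>f m. L2fun \<Omega> f \<Longrightarrow> m \<noteq> 0 \<Longrightarrow> aeq \<Omega> (Ginv \<Omega> G f) (\<lambda>x. m * f x) \<Longrightarrow>
        (\<forall>k\<ge>1. (\<integral>x. f x * \<Psi> k x \<partial>M) = 0) \<Longrightarrow> aeq \<Omega> f (\<lambda>x. 0)"
    using E2 unfolding ordered_eigensystem_def by auto
  have A: "\<And>j. j \<in> A \<Longrightarrow> 1 \<le> j \<and> \<mu> j = m \<and> L2fun \<Omega> (\<Phi> j)"
    using \<Phi> by (auto simp: A_def)
  have "m \<noteq> 0" "\<mu> n \<le> m"
    using \<Phi>[of j0] \<mu>_decreasing[of j0 n] j0 by (auto simp: m_def)
  show ?thesis
    unfolding m_def[symmetric] A_def[symmetric] B_def[symmetric]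
  proof (rule card_le_card_if_rows_independent[where w = "\<lambda>j k. (\<integral>x. \<Phi> j x * \<Psi> k x \<partial>M)"])
    show "finite B" "finite A"
      by (auto simp: A_def B_def)
    fix c
    assume c: "\<forall>k\<in>B. (\<Sum>j\<in>A. c j * (\<integral>x. \<Phi> j x * \<Psi> k x \<partial>M)) = 0"
    define f where "f x = (\<Sum>j\<in>A. c j * \<Phi> j x)" for x
    have f: "L2fun \<Omega> f"
      unfolding f_def using \<open>finite A\<close> A by (intro L2fun_sum) auto
    have f_eig: "aeq \<Omega> (Ginv \<Omega> G f) (\<lambda>x. m * f x)"
      unfolding f_def using \<open>finite A\<close> A \<Phi> by (intro eigenfunction_sum) auto
    have "(\<integral>x. f x * \<Psi> k x \<partial>M) = 0" if k: "1 \<le> k" for k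
    proof (cases "k \<in> B")
      case True
      then show ?thesis
        unfolding f_def using \<open>finite A\<close> A \<Psi>[OF k] c by (subst integral_sum_mult_L2) auto
    next
      case False
      have "\<nu> k \<noteq> m"
      proof (cases "k < n")
        case False
        then have "\<nu> k \<le> \<nu> n"
          using \<nu>_decreasing[of n k] n by auto
        then show ?thesis
          using less \<open>\<mu> n \<le> m\<close> by auto
      qed (use \<open>k \<notin> B\<close> k in \<open>auto simp: B_def\<close>)
      then show ?thesis
        using eigenfunctions_orthogonal[OF f _ f_eig] \<Psi>[OF k] by auto
    qed
    then have f_zero: "aeq \<Omega> f (\<lambda>x. 0)"
      using \<Psi>_complete[OF f \<open>m \<noteq> 0\<close> f_eig] by auto
    show "\<forall>j\<in>A. c j = 0"
    proof
      fix i
      assume i: "i \<in> A"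
      have "(\<integral>x. f x * \<Phi> i x \<partial>M) = (\<Sum>j\<in>A. c j * (\<integral>x. \<Phi> j x * \<Phi> i x \<partial>M))"
        unfolding f_def using \<open>finite A\<close> A i by (intro integral_sum_mult_L2) auto
      also have "\<dots> = (\<Sum>j\<in>A. c j * (if j = i then 1 else 0))"
        using A i by (intro sum.cong refl) (simp add: \<Phi>_orthonormal)
      also have "\<dots> = c i"
        using \<open>finite A\<close> i by (simp add: if_distrib cong: if_cong)
      finally have "c i = (\<integral>x. f x * \<Phi> i x \<partial>M)" ..
      also have "\<dots> = (\<integral>x. 0 \<partial>M)"
      proof -
        have [measurable]: "f \<in> borel_measurable M" "\<Phi> i \<in> borel_measurable M"
          using f A[OF i] by (auto simp: L2fun_def)
        show ?thesis
          using f_zero unfolding aeq_def by (intro integral_cong_AE) (auto elim!: AE_mp)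
      qed
      finally show "c i = 0"
        by simp
    qed
  qed
qed

lemma ordered_eigensystem_eigenvalue_le:
  assumes E1: "ordered_eigensystem \<Omega> G \<Phi> \<mu>" and E2: "ordered_eigensystem \<Omega> G \<Psi> \<nu>" and n: "1 \<le> n"
  shows "\<mu> n \<le> \<nu> n"
proof (rule ccontr)
  assume "\<not> \<mu> n \<le> \<nu> n"
  then have less: "\<nu> n < \<mu> n"
    by simp
  define A where "A m = {j\<in>{1..n}. \<mu> j = m}" for m
  define B where "B m = {k\<in>{1..<n}. \<nu> k = m}" for m
  have "n = card {1..n}"
    by simp
  also have "\<dots> = (\<Sum>m\<in>\<mu> ` {1..n}. card (A m))"
    unfolding A_def using sum.image_gen[of "{1..n}" "\<lambda>_. 1::nat" \<mu>] by simp
  also have "\<dots> \<le> (\<Sum>m\<in>\<mu> ` {1..n}. card (B m))"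
    unfolding A_def B_def using card_eigenvalue_le[OF E1 E2 n less] by (intro sum_mono) auto
  also have "\<dots> = card (\<Union>m\<in>\<mu> ` {1..n}. B m)"
    by (rule card_UN_disjoint[symmetric]) (auto simp: B_def)
  also have "\<dots> \<le> card {1..<n}"
    by (intro card_mono) (auto simp: B_def)
  finally show False
    using n by simp
qed

lemma ordered_eigensystem_normalized_eigenfunction:
  assumes "ordered_eigensystem \<Omega> G \<Phi> \<mu>" "1 \<le> n"
  shows "normalized_eigenfunction (\<mu> n) (\<Phi> n)" "\<mu> n \<noteq> 0"
  using assms by (auto simp: ordered_eigensystem_def normalized_eigenfunction_def power2_eq_square)

text \<open>The constant is taken from one fixed ordered eigensystem; if there is none, the claim is vacuous.\<close>

lemma ordered_eigenfunction_boundary_decay: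
  assumes "1 \<le> n"
  shows "\<exists>\<kappa>>0. \<forall>\<Phi> \<mu>. ordered_eigensystem \<Omega> G \<Phi> \<mu> \<longrightarrow> (AE x in M. \<bar>\<Phi> n x\<bar> \<le> \<kappa> * bdist x powr \<gamma>)"
proof (cases "\<exists>\<Phi> \<mu>. ordered_eigensystem \<Omega> G \<Phi> \<mu>")
  case True
  then obtain \<Phi>0 \<mu>0 where E0: "ordered_eigensystem \<Omega> G \<Phi>0 \<mu>0"
    by blast
  obtain \<kappa> where "\<kappa> > 0" and \<kappa>: "\<forall>\<Phi>. normalized_eigenfunction (\<mu>0 n) \<Phi> \<longrightarrow> (AE x in M. \<bar>\<Phi> x\<bar> \<le> \<kappa> * bdist x powr \<gamma>)"
    using normalized_eigenfunction_boundary_decay ordered_eigensystem_normalized_eigenfunction(2)[OF E0 assms]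
    by blast
  have "AE x in M. \<bar>\<Phi> n x\<bar> \<le> \<kappa> * bdist x powr \<gamma>" if E: "ordered_eigensystem \<Omega> G \<Phi> \<mu>" for \<Phi> \<mu>
  proof -
    have "\<mu> n = \<mu>0 n"
      using ordered_eigensystem_eigenvalue_le[OF E E0 assms] ordered_eigensystem_eigenvalue_le[OF E0 E assms]
      by simp
    then show ?thesis
      using \<kappa> ordered_eigensystem_normalized_eigenfunction(1)[OF E assms] by simp
  qed
  with \<open>\<kappa> > 0\<close> show ?thesis
    by blast
qed (auto intro: exI[of _ 1])

end

lemma K2_self_adjoint_green_function_intro:
  fixes \<Omega> :: "'a::euclidean_space set"
  assumes "2 \<le> DIM('a)" "bounded_domain \<Omega>" "green_left_inverse \<Omega> D L G" "K2 \<Omega> G s \<gamma> c0 c1"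
  shows "K2_self_adjoint_green_function \<Omega> G s \<gamma> c0 c1"
  using assms unfolding green_left_inverse_def by unfold_locales auto

theorem proposition5p4:
  fixes \<Omega> :: "(real ^ 'n) set"
    and D :: "(real ^ 'n \<Rightarrow> real) set"
    and L :: "(real ^ 'n \<Rightarrow> real) \<Rightarrow> (real ^ 'n \<Rightarrow> real)"
    and G :: "real ^ 'n \<Rightarrow> real ^ 'n \<Rightarrow> real"
    and s \<gamma> c0 c1 :: real
    and n :: nat
  assumes "CARD('n) \<ge> 2"
    and "bounded_domain \<Omega>" and "C11_boundary \<Omega>"
    and "linear_L1_operator \<Omega> D L" and "densely_defined \<Omega> D"
    and A1: "m_accretive_L1 \<Omega> D L"
    and A2: "sub_Markov \<Omega> D L"
    and "green_left_inverse \<Omega> D L G"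
    and "K2 \<Omega> G s \<gamma> c0 c1"
    and "n \<ge> 1"
  shows "\<exists>\<kappa>>0. \<forall>\<Phi> \<mu>. ordered_eigensystem \<Omega> G \<Phi> \<mu> \<longrightarrow>
           (AE x in lebesgue_on \<Omega>. \<bar>\<Phi> n x\<bar> \<le> \<kappa> * infdist x (frontier \<Omega>) powr \<gamma>)"
proof -
  interpret K2_self_adjoint_green_function \<Omega> G s \<gamma> c0 c1
    using assms by (intro K2_self_adjoint_green_function_intro) auto
  show ?thesis
    using ordered_eigenfunction_boundary_decay[OF \<open>n \<ge> 1\<close>] .
qed

end
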